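(* Let $\widehat W$ be the affine Weyl group and $A$ the open Weyl alcove (notation in context). For $w\in\widehat W$ let $V_w=(\mathrm{id}-w)(A)=\{x-w(x)\mid x\in A\}$. Then the sets $V_w$, $w\in\widehat W$, are pairwise disjoint (i.e. $V_w\cap V_{w'}=\emptyset$ for $w\neq w'$), and \[V=\bigcup_{w\in\widehat W}V_w.\]
   Context: $(V,\langle\cdot,\cdot\rangle)$ is a finite-dimensional real Euclidean vector space and $W$ is an irreducible Weyl group, presented as a crystallographic reflection group on $V$, with root system $\mathfrak R\subset V$, simple roots $\alpha_1,\dots,\alpha_l$ ($l=\dim V$), highest root $\alpha_{\max}$, and $\alpha_0:=-\alpha_{\max}$. For a root $\alpha$, $\alpha^\vee=2\alpha/\langle\alpha,\alpha\rangle$. The open Weyl alcove is $A=\{x\in V\mid \langle\alpha_i,x\rangle+\delta_{i,0}>0,\ i=0,\dots,l\}$. The affine reflections are $s_i(x)=x-(\langle\alpha_i,x\rangle+\delta_{i,0})\alpha_i^\vee$, $i=0,\dots,l$; the affine Weyl group $\widehat W$ is the group of affine transformations of $V$ generated by $s_0,\dots,s_l$. Equivalently $\widehat W=\Lambda\rtimes W$ where the coroot lattice $\Lambda=\mathbb Z[\alpha_1^\vee,\dots,\alpha_l^\vee]$ acts by translations. *)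

theory Defs
  imports "HOL-Analysis.Analysis"
begin

definition coroot :: "'a::euclidean_space \<Rightarrow> 'a" where
  "coroot \<alpha> = (2 / (\<alpha> \<bullet> \<alpha>)) *\<^sub>R \<alpha>"

definition refl :: "'a::euclidean_space \<Rightarrow> 'a \<Rightarrow> 'a" where
  "refl \<alpha> x = x - (\<alpha> \<bullet> x) *\<^sub>R coroot \<alpha>"

definition root_system :: "'a::euclidean_space set \<Rightarrow> bool" where
  "root_system R \<longleftrightarrow> finite R \<and> 0 \<notin> R \<and> span R = UNIV
    \<and> (\<forall>\<alpha>\<in>R. \<forall>\<beta>\<in>R. refl \<alpha> \<beta> \<in> R)
    \<and> (\<forall>\<alpha>\<in>R. \<forall>\<beta>\<in>R. \<beta> \<bullet> coroot \<alpha> \<in> \<int>)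
    \<and> (\<forall>\<alpha>\<in>R. \<forall>c::real. c *\<^sub>R \<alpha> \<in> R \<longrightarrow> c = 1 \<or> c = -1)"

definition irreducible_rs :: "'a::euclidean_space set \<Rightarrow> bool" where
  "irreducible_rs R \<longleftrightarrow> \<not> (\<exists>R1 R2. R1 \<noteq> {} \<and> R2 \<noteq> {} \<and> R1 \<union> R2 = R \<and> R1 \<inter> R2 = {}
      \<and> (\<forall>\<alpha>\<in>R1. \<forall>\<beta>\<in>R2. \<alpha> \<bullet> \<beta> = 0))"

definition simple_roots :: "'a::euclidean_space set \<Rightarrow> 'a set \<Rightarrow> bool" where
  "simple_roots R S \<longleftrightarrow> S \<subseteq> R \<and> independent S \<and> span S = UNIV
    \<and> (\<forall>\<beta>\<in>R. \<exists>c. (\<forall>\<alpha>\<in>S. c \<alpha> \<in> \<int>) \<and> \<beta> = (\<Sum>\<alpha>\<in>S. c \<alpha> *\<^sub>R \<alpha>)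
                 \<and> ((\<forall>\<alpha>\<in>S. c \<alpha> \<ge> 0) \<or> (\<forall>\<alpha>\<in>S. c \<alpha> \<le> 0)))"

definition root_le :: "'a::euclidean_space set \<Rightarrow> 'a \<Rightarrow> 'a \<Rightarrow> bool" where
  "root_le S y x \<longleftrightarrow> (\<exists>c. (\<forall>\<alpha>\<in>S. c \<alpha> \<ge> 0) \<and> x - y = (\<Sum>\<alpha>\<in>S. c \<alpha> *\<^sub>R \<alpha>))"

definition highest_root :: "'a::euclidean_space set \<Rightarrow> 'a set \<Rightarrow> 'a \<Rightarrow> bool" where
  "highest_root R S \<alpha>m \<longleftrightarrow> \<alpha>m \<in> R \<and> (\<forall>\<beta>\<in>R. root_le S \<beta> \<alpha>m)"

definition alcove :: "'a::euclidean_space set \<Rightarrow> 'a \<Rightarrow> 'a set" where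
  "alcove S \<alpha>m = {x. (\<forall>\<alpha>\<in>S. \<alpha> \<bullet> x > 0) \<and> (- \<alpha>m) \<bullet> x + 1 > 0}"

definition aff_refl0 :: "'a::euclidean_space \<Rightarrow> 'a \<Rightarrow> 'a" where
  "aff_refl0 \<alpha>m x = x - ((- \<alpha>m) \<bullet> x + 1) *\<^sub>R coroot (- \<alpha>m)"

definition aff_gens :: "'a::euclidean_space set \<Rightarrow> 'a \<Rightarrow> ('a \<Rightarrow> 'a) set" where
  "aff_gens S \<alpha>m = insert (aff_refl0 \<alpha>m) (refl ` S)"

text \<open>Group generated by a set of involutions under composition (= monoid generated).\<close>
inductive_set generated :: "('a \<Rightarrow> 'a) set \<Rightarrow> ('a \<Rightarrow> 'a) set" for G where
  gen_id: "id \<in> generated G"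
| gen_comp: "g \<in> G \<Longrightarrow> w \<in> generated G \<Longrightarrow> g \<circ> w \<in> generated G"

definition affine_weyl :: "'a::euclidean_space set \<Rightarrow> 'a \<Rightarrow> ('a \<Rightarrow> 'a) set" where
  "affine_weyl S \<alpha>m = generated (aff_gens S \<alpha>m)"

end

theory Submission
  imports Defs
begin

(*
  Disjointness: the affine Weyl group acts by affine isometries, permutes the hyperplanes
  {beta . z = k} (beta a root, k an integer) and acts freely on alcoves; with local finiteness
  of orbits this makes the alcove a strict Dirichlet domain, dist a c < dist a (w c) for a, c
  in A and w <> id.  Then x - w x = x' - w' x' forces dist x x' = dist x (w^-1 w' x'), so w = w'.

  Covering: folding into the closed alcove is 1-Lipschitz, so Brouwer's theorem gives a solution
  of x - w x = v with x in the closure of A.  If x lies on walls, a second fixed point argument,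
  on a cone of directions at x, moves x to a solution on strictly fewer walls; induction on the
  number of walls ends in the open alcove.
*)

subsection \<open>Groups generated by involutions\<close>

lemma generated_comp:
  assumes "a \<in> generated G" "b \<in> generated G" shows "a \<circ> b \<in> generated G"
  using assms by (induction a rule: generated.induct) (auto simp: comp_assoc intro: generated.intros)

lemma generated_gen: "g \<in> G \<Longrightarrow> g \<in> generated G"
  by (metis generated.gen_comp generated.gen_id comp_id)

lemma generated_mono: "G \<subseteq> H \<Longrightarrow> generated G \<subseteq> generated H"
proof
  fix x assume GH: "G \<subseteq> H" and x: "x \<in> generated G"
  from x show "x \<in> generated H" using GH by (induction x rule: generated.induct) (auto intro: generated.intros)
qed

lemma generated_preserves:
  assumes "h \<in> generated G" "P id" "\<And>g w. g \<in> G \<Longrightarrow> P w \<Longrightarrow> P (g \<circ> w)"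
  shows "P h"
  using assms by (induction h rule: generated.induct) auto

lemma generated_inv:
  assumes inv: "\<And>g. g \<in> G \<Longrightarrow> g \<circ> g = id" and "h \<in> generated G"
  shows "inv h \<in> generated G \<and> inv h \<circ> h = id \<and> h \<circ> inv h = id"
proof -
  have "\<exists>h'\<in>generated G. h' \<circ> h = id \<and> h \<circ> h' = id"
    using assms(2)
  proof (induction h rule: generated.induct)
    case gen_id show ?case by (rule bexI[of _ id]) (simp_all add: generated.gen_id)
  next
    case (gen_comp g w)
    then obtain w' where w': "w' \<in> generated G" "w' \<circ> w = id" "w \<circ> w' = id" by blast
    have gg: "g \<circ> g = id" using inv gen_comp by blast
    have "w' \<circ> g \<in> generated G" using generated_comp[OF w'(1) generated_gen[OF gen_comp(1)]] .
    moreover have "(w' \<circ> g) \<circ> (g \<circ> w) = id" "(g \<circ> w) \<circ> (w' \<circ> g) = id"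
      by (metis comp_assoc comp_id gg w'(2), metis comp_assoc comp_id gg w'(3))
    ultimately show ?case by blast
  qed
  then obtain h' where h': "h' \<in> generated G" "h' \<circ> h = id" "h \<circ> h' = id" by blast
  moreover have "inv h = h'" by (rule inv_unique_comp[OF h'(3) h'(2)])
  ultimately show ?thesis by simp
qed

subsection \<open>Affine isometries\<close>

definition affine_isometry :: "('a::euclidean_space \<Rightarrow> 'a) \<Rightarrow> bool" where
  "affine_isometry h \<longleftrightarrow> (\<exists>U b. orthogonal_transformation U \<and> (\<forall>z. h z = U z + b))"

lemma affine_isometry_id: "affine_isometry id"
  unfolding affine_isometry_def by (rule exI[of _ "\<lambda>x. x"], rule exI[of _ 0]) simp

lemma affine_isometry_comp: "affine_isometry g \<Longrightarrow> affine_isometry h \<Longrightarrow> affine_isometry (g \<circ> h)"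
  unfolding affine_isometry_def
proof (elim exE conjE)
  fix U b V c assume U: "orthogonal_transformation U" "\<forall>z. g z = U z + b"
    and V: "orthogonal_transformation V" "\<forall>z. h z = V z + c"
  have "\<forall>z. (g \<circ> h) z = (U \<circ> V) z + (U c + b)"
    using U V linear_add[OF orthogonal_transformation_linear[OF U(1)]] by simp
  then show "\<exists>W d. orthogonal_transformation W \<and> (\<forall>z. (g \<circ> h) z = W z + d)"
    using orthogonal_transformation_compose[OF U(1) V(1)] by blast
qed

lemma reflection_orthogonal:
  assumes "\<beta> \<noteq> 0"
  shows "orthogonal_transformation (\<lambda>z. z - (\<beta> \<bullet> z) *\<^sub>R coroot \<beta>)"
  unfolding orthogonal_transformation
proof
  show "linear (\<lambda>z. z - (\<beta> \<bullet> z) *\<^sub>R coroot \<beta>)"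
    unfolding linear_iff by (auto simp: inner_add_right algebra_simps scaleR_add_left)
  have bb: "\<beta> \<bullet> \<beta> \<noteq> 0" using assms by simp
  show "\<forall>v. norm (v - (\<beta> \<bullet> v) *\<^sub>R coroot \<beta>) = norm v"
  proof
    fix v
    have "(v - (\<beta> \<bullet> v) *\<^sub>R coroot \<beta>) \<bullet> (v - (\<beta> \<bullet> v) *\<^sub>R coroot \<beta>) = v \<bullet> v"
      using bb by (simp add: coroot_def inner_diff_left inner_diff_right algebra_simps
          inner_commute power2_eq_square)
    then show "norm (v - (\<beta> \<bullet> v) *\<^sub>R coroot \<beta>) = norm v"
      by (metis norm_eq_sqrt_inner)
  qed
qed

lemma affine_isometry_linear_part:
  assumes "affine_isometry h"
  shows "orthogonal_transformation (\<lambda>z. h (p + z) - h p)"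
proof -
  obtain U b where U: "orthogonal_transformation U" "\<forall>z. h z = U z + b"
    using assms unfolding affine_isometry_def by blast
  have "(\<lambda>z. h (p + z) - h p) = U"
  proof
    fix z show "h (p + z) - h p = U z"
      using U linear_add[OF orthogonal_transformation_linear[OF U(1)]] by simp
  qed
  then show ?thesis using U(1) by simp
qed

lemma affine_isometry_dist: "affine_isometry h \<Longrightarrow> dist (h x) (h y) = dist x y"
  unfolding affine_isometry_def dist_norm
  by (metis (no_types, lifting) add_diff_cancel_right linear_diff orthogonal_transformation_linear
      orthogonal_transformation_norm)

lemma affine_isometry_inj: "affine_isometry h \<Longrightarrow> h x = h y \<Longrightarrow> x = y"
  using affine_isometry_dist[of h x y] by simp

lemma affine_isometry_inner:
  assumes "affine_isometry h"
  shows "(h p - h q) \<bullet> (h r - h q) = (p - q) \<bullet> (r - q)"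
proof -
  let ?L = "\<lambda>z. h (q + z) - h q"
  have "orthogonal_transformation ?L" by (rule affine_isometry_linear_part[OF assms])
  then have "?L (p - q) \<bullet> ?L (r - q) = (p - q) \<bullet> (r - q)"
    unfolding orthogonal_transformation_def by blast
  then show ?thesis by simp
qed

lemma affine_isometry_line:
  assumes "affine_isometry h"
  shows "h (p + t *\<^sub>R (q - p)) = h p + t *\<^sub>R (h q - h p)"
proof -
  let ?L = "\<lambda>z. h (p + z) - h p"
  have "linear ?L"
    using affine_isometry_linear_part[OF assms] orthogonal_transformation_linear by blast
  then have "?L (t *\<^sub>R (q - p)) = t *\<^sub>R ?L (q - p)" by (rule linear_scale)
  then show ?thesis by (simp add: algebra_simps)
qed

lemma affine_isometry_continuous: "affine_isometry h \<Longrightarrow> continuous_on UNIV h"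
  by (rule lipschitz_on_continuous_on[of 1])
     (simp add: lipschitz_on_def affine_isometry_dist)

lemma sign_change_index:
  fixes \<phi> :: "nat \<Rightarrow> real"
  assumes "\<phi> k < 0" "0 < \<phi> n" "k \<le> n" and nz: "\<And>m. \<phi> m \<noteq> 0"
  shows "\<exists>m. k \<le> m \<and> m < n \<and> \<phi> m < 0 \<and> 0 < \<phi> (Suc m)"
  using assms(3,2)
proof (induction n rule: dec_induct)
  case base then show ?case using assms(1) by simp
next
  case (step n)
  show ?case
  proof (cases "\<phi> n < 0")
    case True then show ?thesis using step by (intro exI[of _ n]) auto
  next
    case False
    then have "0 < \<phi> n" using nz[of n] by linarith
    then obtain m where "k \<le> m \<and> m < n \<and> \<phi> m < 0 \<and> 0 < \<phi> (Suc m)" using step.IH by blast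
    then show ?thesis by (intro exI[of _ m]) auto
  qed
qed

lemma segment_sign:
  fixes x0 y :: real
  assumes x0: "x0 \<noteq> 0" and h: "\<forall>t. 0 \<le> t \<longrightarrow> t < 1 \<longrightarrow> x0 + t * (y - x0) \<noteq> 0"
  shows "0 \<le> x0 * y"
proof (rule ccontr)
  assume "\<not> 0 \<le> x0 * y"
  then have xy: "x0 * y < 0" by simp
  define t where "t = x0 / (x0 - y)"
  have d: "x0 - y \<noteq> 0" using xy by auto
  have "0 \<le> t \<and> t < 1"
  proof (cases "x0 > 0")
    case True
    then have "y < 0" using xy by (simp add: mult_less_0_iff)
    then show ?thesis using True by (simp add: t_def field_simps)
  next
    case False
    then have "x0 < 0" "y > 0" using x0 xy by (auto simp: mult_less_0_iff)
    then show ?thesis by (simp add: t_def field_simps)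
  qed
  moreover have "x0 + t * (y - x0) = 0" using d by (simp add: t_def field_simps)
  ultimately show False using h by blast
qed

lemma opposite_signs_zero:
  fixes x y z :: real
  assumes "0 \<le> x * z" "0 \<le> y * z" "x * y < 0"
  shows "z = 0"
proof (rule ccontr)
  assume "z \<noteq> 0"
  then have "x * y * (z * z) < 0" by (intro mult_neg_pos[OF assms(3)]) (metis not_real_square_gt_zero)
  moreover have "0 \<le> (x * z) * (y * z)" using assms(1,2) by (rule mult_nonneg_nonneg)
  ultimately show False by (simp add: algebra_simps)
qed

lemma eventually_at_right_0_witness:
  assumes "eventually P (at_right (0::real))" obtains e where "0 < e" "e < 1" "P e"
proof -
  obtain b where b: "b > 0" "\<forall>y>0. y < b \<longrightarrow> P y"
    using assms unfolding eventually_at_right_field by auto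
  then show thesis using that[of "min (b/2) (1/2)"] by auto
qed

lemma eventually_pos_at_right_0:
  assumes "(c::real) > 0" shows "eventually (\<lambda>e. 0 < c + e * d) (at_right 0)"
proof -
  have "((\<lambda>e. c + e * d) \<longlongrightarrow> c + 0 * d) (at_right 0)"
    by (intro tendsto_add tendsto_const tendsto_mult tendsto_ident_at)
  then show ?thesis using order_tendstoD(1) assms by fastforce
qed

text \<open>A closed convex set \<open>C\<close> avoiding the origin and stable under translation by a convex
  cone \<open>K \<supseteq> C\<close> yields a unit vector of \<open>K\<close> in the dual cone of \<open>K\<close>: its point nearest to
  the origin.\<close>

lemma dual_unit_vector:
  fixes C K :: "'a::euclidean_space set"
  assumes C: "closed C" "C \<noteq> {}" "0 \<notin> C" "C \<subseteq> K"
    and C_shift: "\<And>c k t. c \<in> C \<Longrightarrow> k \<in> K \<Longrightarrow> 0 \<le> t \<Longrightarrow> c + t *\<^sub>R k \<in> C"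
    and K: "convex_cone K"
  obtains e where "e \<in> K" "norm e = 1" "\<And>k. k \<in> K \<Longrightarrow> 0 \<le> e \<bullet> k"
proof -
  define e0 where "e0 = closest_point C 0"
  have e0C: "e0 \<in> C"
    unfolding e0_def by (rule closest_point_in_set[OF C(1,2)])
  have e0_min: "norm e0 \<le> norm c" if "c \<in> C" for c
    using closest_point_le[OF C(1) that, of 0] by (simp add: e0_def)
  have e0_dual: "0 \<le> e0 \<bullet> k" if k: "k \<in> K" for k
  proof (rule ccontr)
    assume "\<not> 0 \<le> e0 \<bullet> k"
    then have neg: "e0 \<bullet> k < 0" by simp
    then have "k \<noteq> 0" by auto
    then have kk: "0 < k \<bullet> k" by simp
    define t where "t = - (e0 \<bullet> k) / (k \<bullet> k)"
    have t0: "0 \<le> t" using neg kk by (simp add: t_def divide_nonpos_pos less_imp_le)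
    have "e0 \<bullet> e0 \<le> (e0 + t *\<^sub>R k) \<bullet> (e0 + t *\<^sub>R k)"
      using e0_min[OF C_shift[OF e0C k t0]] by (simp add: norm_eq_sqrt_inner)
    also have "\<dots> = e0 \<bullet> e0 + 2 * t * (e0 \<bullet> k) + t * t * (k \<bullet> k)"
      by (simp add: inner_add_left inner_add_right inner_commute[of k e0] algebra_simps)
    also have "\<dots> = e0 \<bullet> e0 - (e0 \<bullet> k) * (e0 \<bullet> k) / (k \<bullet> k)"
      using kk by (simp add: t_def field_simps power2_eq_square)
    finally have "(e0 \<bullet> k) * (e0 \<bullet> k) / (k \<bullet> k) \<le> 0" by simp
    moreover have "0 < (e0 \<bullet> k) * (e0 \<bullet> k) / (k \<bullet> k)"
      using neg kk by (simp add: mult_neg_neg)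
    ultimately show False by simp
  qed
  have "e0 \<noteq> 0" using e0C C(3) by auto
  then show thesis
    using e0C C(4) e0_dual convex_cone_scaleR[OF K, of "1 / norm e0" e0]
    by (intro that[of "(1 / norm e0) *\<^sub>R e0"]) auto
qed

lemma norm_push_dual:
  fixes y e :: "'a::real_inner"
  assumes ye: "0 \<le> y \<bullet> e" and e: "norm e = 1" and t: "0 < t"
  shows "norm y < norm (y + t *\<^sub>R e)"
proof -
  have ee: "e \<bullet> e = 1" using e by (simp add: dot_square_norm)
  have "(norm (y + t *\<^sub>R e))\<^sup>2 = (y + t *\<^sub>R e) \<bullet> (y + t *\<^sub>R e)" by (simp add: dot_square_norm)
  also have "\<dots> = y \<bullet> y + 2 * t * (y \<bullet> e) + t * t * (e \<bullet> e)"
    by (simp add: inner_add_left inner_add_right inner_commute[of e y] algebra_simps)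
  also have "\<dots> = (norm y)\<^sup>2 + 2 * t * (y \<bullet> e) + t\<^sup>2"
    using ee by (simp add: dot_square_norm power2_eq_square)
  finally have "(norm (y + t *\<^sub>R e))\<^sup>2 = (norm y)\<^sup>2 + 2 * t * (y \<bullet> e) + t\<^sup>2" .
  moreover have "0 \<le> 2 * t * (y \<bullet> e)" "0 < t\<^sup>2" using ye t by simp_all
  ultimately have "(norm y)\<^sup>2 < (norm (y + t *\<^sub>R e))\<^sup>2" by linarith
  then show ?thesis by (rule power2_less_imp_less) simp
qed

text \<open>A norm-preserving continuous self-map of a closed convex cone that admits such a dual
  unit vector fixes a unit vector (Brouwer's theorem on the unit ball of the cone, applied to
  \<open>z \<mapsto> f z + (1 - norm z) e\<close>).\<close>

lemma cone_fixed_unit_vector: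
  fixes f :: "'a::euclidean_space \<Rightarrow> 'a"
  assumes K: "convex_cone K" "closed K"
    and e: "e \<in> K" "norm e = 1" "\<And>k. k \<in> K \<Longrightarrow> 0 \<le> e \<bullet> k"
    and f: "continuous_on K f" "f ` K \<subseteq> K" "\<And>z. z \<in> K \<Longrightarrow> norm (f z) = norm z"
  obtains z where "z \<in> K" "norm z = 1" "f z = z"
proof -
  define D where "D = K \<inter> cball 0 1"
  define \<phi> where "\<phi> z = f z + (1 - norm z) *\<^sub>R e" for z
  have D: "compact D" "convex D" "D \<noteq> {}"
    using K convex_cone_contains_0[OF K(1)] unfolding D_def convex_cone_def
    by (auto intro!: closed_Int_compact convex_Int)
  have \<phi>_cont: "continuous_on D \<phi>"
    unfolding \<phi>_def D_def by (intro continuous_intros continuous_on_subset[OF f(1)]) auto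
  have \<phi>_D: "\<phi> \<in> D \<rightarrow> D"
  proof
    fix z assume z: "z \<in> D"
    then have "z \<in> K" "norm z \<le> 1" by (auto simp: D_def)
    then have "\<phi> z \<in> K"
      unfolding \<phi>_def using f(2) e(1)
      by (intro convex_cone_add[OF K(1)] convex_cone_scaleR[OF K(1)]) auto
    moreover have "norm (\<phi> z) \<le> 1"
      using norm_triangle_ineq[of "f z" "(1 - norm z) *\<^sub>R e"] f(3)[OF \<open>z \<in> K\<close>] e(2) \<open>norm z \<le> 1\<close>
      by (simp add: \<phi>_def)
    ultimately show "\<phi> z \<in> D" by (simp add: D_def)
  qed
  obtain z where zD: "z \<in> D" and fixed: "\<phi> z = z"
    using brouwer[OF D \<phi>_cont \<phi>_D] by blast
  then have zK: "z \<in> K" by (simp add: D_def)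
  have "norm z = 1"
  proof (rule ccontr)
    assume "norm z \<noteq> 1"
    then have t: "0 < 1 - norm z" using zD by (simp add: D_def)
    have "0 \<le> f z \<bullet> e" using e(3)[of "f z"] f(2) zK by (auto simp: inner_commute)
    then have "norm (f z) < norm (f z + (1 - norm z) *\<^sub>R e)" by (rule norm_push_dual[OF _ e(2) t])
    then show False using fixed f(3)[OF zK] by (simp add: \<phi>_def)
  qed
  moreover have "f z = z" using fixed calculation by (simp add: \<phi>_def)
  ultimately show thesis using zK that by blast
qed


subsection \<open>Roots, walls and the affine Weyl group\<close>

locale affine_root_data =
  fixes R S :: "'a::euclidean_space set" and am :: 'a
  assumes rs: "root_system R" and sr: "simple_roots R S" and hr: "highest_root R S am"
begin

lemma finite_R: "finite R" using rs by (simp add: root_system_def)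
lemma zero_notin_R: "0 \<notin> R" using rs by (simp add: root_system_def)
lemma refl_in_R: "\<alpha> \<in> R \<Longrightarrow> \<beta> \<in> R \<Longrightarrow> refl \<alpha> \<beta> \<in> R" using rs by (simp add: root_system_def)
lemma cartan_int: "\<alpha> \<in> R \<Longrightarrow> \<beta> \<in> R \<Longrightarrow> \<beta> \<bullet> coroot \<alpha> \<in> \<int>" using rs by (simp add: root_system_def)
lemma reduced_R: "\<alpha> \<in> R \<Longrightarrow> c *\<^sub>R \<alpha> \<in> R \<Longrightarrow> c = 1 \<or> c = -1" using rs by (simp add: root_system_def)
lemma S_sub_R: "S \<subseteq> R" using sr by (simp add: simple_roots_def)
lemma S_independent: "independent S" using sr by (simp add: simple_roots_def)
lemma S_spans: "span S = UNIV" using sr by (simp add: simple_roots_def)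
lemma finite_S: "finite S" using S_sub_R finite_R finite_subset by blast
lemma root_expansion: "\<beta> \<in> R \<Longrightarrow> \<exists>c. (\<forall>\<alpha>\<in>S. c \<alpha> \<in> \<int>) \<and> \<beta> = (\<Sum>\<alpha>\<in>S. c \<alpha> *\<^sub>R \<alpha>)
                 \<and> ((\<forall>\<alpha>\<in>S. c \<alpha> \<ge> 0) \<or> (\<forall>\<alpha>\<in>S. c \<alpha> \<le> 0))"
  using sr by (simp add: simple_roots_def)
lemma am_in_R: "am \<in> R" using hr by (simp add: highest_root_def)
lemma am_highest: "\<beta> \<in> R \<Longrightarrow> \<exists>c. (\<forall>\<alpha>\<in>S. c \<alpha> \<ge> 0) \<and> am - \<beta> = (\<Sum>\<alpha>\<in>S. c \<alpha> *\<^sub>R \<alpha>)"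
  using hr by (simp add: highest_root_def root_le_def)

lemma root_nonzero: "\<beta> \<in> R \<Longrightarrow> \<beta> \<noteq> 0" using zero_notin_R by auto

lemma neg_root: "\<beta> \<in> R \<Longrightarrow> - \<beta> \<in> R"
  using refl_in_R[of \<beta> \<beta>] root_nonzero[of \<beta>]
  by (simp add: refl_def coroot_def algebra_simps scaleR_2)

definition hyp_refl :: "'a \<Rightarrow> real \<Rightarrow> 'a \<Rightarrow> 'a" where
  "hyp_refl \<beta> k z = z - (\<beta> \<bullet> z - k) *\<^sub>R coroot \<beta>"

text \<open>The walls of the alcove are indexed by \<open>None\<close> (the wall \<open>\<alpha>\<^sub>0 \<bullet> z + 1 = 0\<close>, with
  \<open>\<alpha>\<^sub>0 = - am\<close>) and \<open>Some \<alpha>\<close> for simple roots \<open>\<alpha>\<close> (the wall \<open>\<alpha> \<bullet> z = 0\<close>); wall \<open>i\<close> is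
  the zero set of the affine function \<open>wall i z = wall_root i \<bullet> z - wall_level i\<close>, which is
  positive on the alcove.\<close>

fun wall_root :: "'a option \<Rightarrow> 'a" where
  "wall_root None = - am" | "wall_root (Some \<alpha>) = \<alpha>"

fun wall_level :: "'a option \<Rightarrow> real" where
  "wall_level None = -1" | "wall_level (Some \<alpha>) = 0"

definition wall :: "'a option \<Rightarrow> 'a \<Rightarrow> real" where
  "wall i z = wall_root i \<bullet> z - wall_level i"

definition Walls :: "'a option set" where "Walls = insert None (Some ` S)"

definition sref :: "'a option \<Rightarrow> 'a \<Rightarrow> 'a" where
  "sref i = hyp_refl (wall_root i) (wall_level i)"

definition Alc :: "'a set" where "Alc = {z. \<forall>i\<in>Walls. 0 < wall i z}"
definition Abar :: "'a set" where "Abar = {z. \<forall>i\<in>Walls. 0 \<le> wall i z}"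
definition Wa :: "('a \<Rightarrow> 'a) set" where "Wa = generated (sref ` Walls)"

definition regular :: "'a \<Rightarrow> bool" where
  "regular z \<longleftrightarrow> (\<forall>\<beta>\<in>R. \<forall>k\<in>\<int>. \<beta> \<bullet> z \<noteq> k)"

lemma finite_Walls: "finite Walls" using finite_S by (simp add: Walls_def)
lemma wall_root_in_R: "i \<in> Walls \<Longrightarrow> wall_root i \<in> R" using am_in_R neg_root S_sub_R by (auto simp: Walls_def)
lemma wall_level_int: "wall_level i \<in> \<int>" by (cases i) auto
lemma wall_root_nonzero: "i \<in> Walls \<Longrightarrow> wall_root i \<noteq> 0" using wall_root_in_R root_nonzero by blast
lemma wall_Some: "wall (Some \<alpha>) x = \<alpha> \<bullet> x" by (simp add: wall_def)
lemma wall_None: "wall None x = 1 - am \<bullet> x" by (simp add: wall_def)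

lemma wall_line: "wall i (x + t *\<^sub>R y) = wall i x + t * (wall_root i \<bullet> y)"
  by (simp add: wall_def inner_add_right)

lemma wall_affine_comb: "u + v = 1 \<Longrightarrow> wall i (u *\<^sub>R x + v *\<^sub>R y) = u * wall i x + v * wall i y"
  by (simp add: wall_def inner_add_right algebra_simps flip: distrib_right)

lemma affine_weyl_eq: "affine_weyl S am = Wa"
proof -
  have "sref None = aff_refl0 am"
    by (rule ext) (simp add: sref_def hyp_refl_def aff_refl0_def)
  moreover have "sref (Some \<alpha>) = refl \<alpha>" for \<alpha>
    by (rule ext) (simp add: sref_def hyp_refl_def refl_def)
  ultimately have "aff_gens S am = sref ` Walls"
    by (auto simp: aff_gens_def Walls_def image_iff)
  then show ?thesis by (simp add: affine_weyl_def Wa_def)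
qed

lemma alcove_eq: "alcove S am = Alc"
  by (auto simp: alcove_def Alc_def Walls_def wall_def)

lemma sref_eq: "sref i z = z - wall i z *\<^sub>R coroot (wall_root i)"
  by (simp add: sref_def hyp_refl_def wall_def)

lemma wall_sref:
  assumes "i \<in> Walls" shows "wall i (sref i z) = - wall i z"
proof -
  have "wall_root i \<bullet> coroot (wall_root i) = 2"
    using wall_root_nonzero[OF assms] by (simp add: coroot_def)
  then show ?thesis by (simp add: sref_eq wall_def inner_diff_right algebra_simps)
qed

lemma sref_fix: "wall i z = 0 \<Longrightarrow> sref i z = z"
  by (simp add: sref_eq)

lemma sref_invol: "i \<in> Walls \<Longrightarrow> sref i \<circ> sref i = id"
proof (rule ext)
  fix z assume i: "i \<in> Walls"
  have "sref i (sref i z) = sref i z - wall i (sref i z) *\<^sub>R coroot (wall_root i)"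
    by (rule sref_eq)
  also have "\<dots> = z" unfolding wall_sref[OF i] by (subst sref_eq) simp
  finally show "(sref i \<circ> sref i) z = id z" by simp
qed

lemma affine_isometry_sref: "i \<in> Walls \<Longrightarrow> affine_isometry (sref i)"
  unfolding affine_isometry_def
  using reflection_orthogonal[OF wall_root_nonzero, of i]
  by (intro exI[of _ "\<lambda>z. z - (wall_root i \<bullet> z) *\<^sub>R coroot (wall_root i)"]
      exI[of _ "wall_level i *\<^sub>R coroot (wall_root i)"]) (auto simp: sref_def hyp_refl_def algebra_simps)

lemma sref_in_Wa: "i \<in> Walls \<Longrightarrow> sref i \<in> Wa"
  unfolding Wa_def by (rule generated_gen) auto

lemma Wa_comp: "g \<in> Wa \<Longrightarrow> h \<in> Wa \<Longrightarrow> g \<circ> h \<in> Wa"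
  unfolding Wa_def by (rule generated_comp)

lemma Wa_id: "id \<in> Wa" unfolding Wa_def by (rule generated.gen_id)

lemma Wa_inv: "h \<in> Wa \<Longrightarrow> inv h \<in> Wa \<and> inv h \<circ> h = id \<and> h \<circ> inv h = id"
  unfolding Wa_def by (rule generated_inv) (auto intro: sref_invol)

lemma Wa_affine_isometry: "h \<in> Wa \<Longrightarrow> affine_isometry h"
  unfolding Wa_def
proof (erule generated_preserves)
  fix g w :: "'a \<Rightarrow> 'a" assume "g \<in> sref ` Walls" "affine_isometry w"
  then show "affine_isometry (g \<circ> w)" using affine_isometry_comp affine_isometry_sref by blast
qed (rule affine_isometry_id)

lemma Wa_inv_apply: "h \<in> Wa \<Longrightarrow> inv h (h z) = z"
  using Wa_inv[of h] by (blast intro: pointfree_idE)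

lemma Wa_apply_inv: "h \<in> Wa \<Longrightarrow> h (inv h z) = z"
  using Wa_inv[of h] by (blast intro: pointfree_idE)

lemma Wa_inv_comp_id:
  assumes "h \<in> Wa" "inv h \<circ> h' = id" shows "h' = h"
proof -
  have "h' = (h \<circ> inv h) \<circ> h'" using Wa_inv[OF assms(1)] by simp
  also have "\<dots> = h \<circ> (inv h \<circ> h')" by (simp add: comp_assoc)
  finally show ?thesis using assms(2) by simp
qed

text \<open>The affine Weyl group permutes the hyperplanes \<open>\<beta> \<bullet> z = k\<close>: the reflection
  \<open>hyp_refl \<beta> k\<close> sends \<open>\<gamma> \<bullet> z = k'\<close> to \<open>refl \<beta> \<gamma> \<bullet> z = k' - k (\<gamma> \<bullet> coroot \<beta>)\<close>.\<close>

definition preserves_arrangement :: "('a \<Rightarrow> 'a) \<Rightarrow> bool" where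
  "preserves_arrangement h \<longleftrightarrow>
     (\<forall>\<beta>\<in>R. \<forall>k\<in>\<int>. \<exists>\<beta>'\<in>R. \<exists>k'\<in>\<int>. \<forall>z. \<beta> \<bullet> h z - k = \<beta>' \<bullet> z - k')"

lemma preserves_arrangement_hyp_refl:
  assumes "\<beta> \<in> R" "k \<in> \<int>" shows "preserves_arrangement (hyp_refl \<beta> k)"
  unfolding preserves_arrangement_def
proof (intro ballI)
  fix \<gamma> and k2 :: real assume g: "\<gamma> \<in> R" and k2: "k2 \<in> \<int>"
  define c where "c = \<gamma> \<bullet> coroot \<beta>"
  have "\<forall>z. \<gamma> \<bullet> hyp_refl \<beta> k z - k2 = refl \<beta> \<gamma> \<bullet> z - (k2 - k * c)"
    by (simp add: refl_def c_def hyp_refl_def inner_diff_right inner_diff_left coroot_def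
        inner_commute algebra_simps add_divide_distrib diff_divide_distrib)
  moreover have "k2 - k * c \<in> \<int>"
    using cartan_int[OF assms(1) g] k2 assms(2) by (simp add: c_def)
  ultimately show "\<exists>\<beta>'\<in>R. \<exists>k'\<in>\<int>. \<forall>z. \<gamma> \<bullet> hyp_refl \<beta> k z - k2 = \<beta>' \<bullet> z - k'"
    using refl_in_R[OF assms(1) g] by blast
qed

lemma Wa_preserves_arrangement: "h \<in> Wa \<Longrightarrow> preserves_arrangement h"
  unfolding Wa_def
proof (erule generated_preserves)
  show "preserves_arrangement id" unfolding preserves_arrangement_def by auto
  fix g w assume "g \<in> sref ` Walls" "preserves_arrangement w"
  moreover have "preserves_arrangement g" if "g \<in> sref ` Walls"
    using that by (auto simp: sref_def intro!: preserves_arrangement_hyp_refl wall_root_in_R wall_level_int)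
  ultimately show "preserves_arrangement (g \<circ> w)"
    unfolding preserves_arrangement_def by simp metis
qed

lemma wall_comp_Wa:
  "h \<in> Wa \<Longrightarrow> i \<in> Walls \<Longrightarrow> \<exists>\<beta>'\<in>R. \<exists>k'\<in>\<int>. \<forall>z. wall i (h z) = \<beta>' \<bullet> z - k'"
  using Wa_preserves_arrangement wall_root_in_R wall_level_int
  unfolding preserves_arrangement_def wall_def by blast

lemma Wa_regular:
  assumes h: "h \<in> Wa" and z: "regular z" shows "regular (h z)"
  unfolding regular_def
proof (intro ballI)
  fix \<beta> and k :: real assume b: "\<beta> \<in> R" "k \<in> \<int>"
  obtain \<beta>' k' where "\<beta>' \<in> R" "k' \<in> \<int>" "\<forall>z. \<beta> \<bullet> h z - k = \<beta>' \<bullet> z - k'"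
    using Wa_preserves_arrangement[OF h] b unfolding preserves_arrangement_def by blast
  then show "\<beta> \<bullet> h z \<noteq> k" using z unfolding regular_def by (metis eq_iff_diff_eq_0)
qed

lemma regular_wall_nonzero: "regular z \<Longrightarrow> i \<in> Walls \<Longrightarrow> wall i z \<noteq> 0"
  unfolding regular_def wall_def using wall_root_in_R wall_level_int by auto

subsection \<open>Geometry of the alcove\<close>

lemma dual_basis_exists:
  assumes a: "\<alpha> \<in> S" shows "\<exists>\<omega>. \<alpha> \<bullet> \<omega> = 1 \<and> (\<forall>\<alpha>'\<in>S. \<alpha>' \<noteq> \<alpha> \<longrightarrow> \<alpha>' \<bullet> \<omega> = 0)"
proof -
  obtain y z where y: "y \<in> span (S - {\<alpha>})" and z: "\<And>w. w \<in> span (S - {\<alpha>}) \<Longrightarrow> orthogonal z w"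
    and e: "\<alpha> = y + z"
    using orthogonal_subspace_decomp_exists[of "S - {\<alpha>}" \<alpha>] by blast
  have "z \<noteq> 0"
  proof
    assume "z = 0"
    then have "\<alpha> \<in> span (S - {\<alpha>})" using e y by simp
    then show False using a S_independent dependent_def by blast
  qed
  then have zz: "z \<bullet> z > 0" by simp
  have az: "\<alpha> \<bullet> z = z \<bullet> z"
    using z[OF y] by (simp add: e inner_add_left inner_commute[of y z] orthogonal_def)
  show ?thesis
  proof (intro exI[of _ "(1 / (z \<bullet> z)) *\<^sub>R z"] conjI ballI impI)
    show "\<alpha> \<bullet> ((1 / (z \<bullet> z)) *\<^sub>R z) = 1" using az zz by simp
    fix \<alpha>' assume "\<alpha>' \<in> S" "\<alpha>' \<noteq> \<alpha>"
    then have "\<alpha>' \<in> span (S - {\<alpha>})" by (intro span_base) auto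
    then show "\<alpha>' \<bullet> ((1 / (z \<bullet> z)) *\<^sub>R z) = 0" using z by (simp add: orthogonal_def inner_commute)
  qed
qed

definition fund_weight :: "'a \<Rightarrow> 'a" where
  "fund_weight \<alpha> = (SOME \<omega>. \<alpha> \<bullet> \<omega> = 1 \<and> (\<forall>\<alpha>'\<in>S. \<alpha>' \<noteq> \<alpha> \<longrightarrow> \<alpha>' \<bullet> \<omega> = 0))"

lemma fund_weight:
  "\<alpha> \<in> S \<Longrightarrow> \<alpha>' \<in> S \<Longrightarrow> \<alpha>' \<bullet> fund_weight \<alpha> = (if \<alpha>' = \<alpha> then 1 else 0)"
  using someI_ex[OF dual_basis_exists] unfolding fund_weight_def by auto

lemma inner_fund_weight_comb:
  assumes a: "\<alpha> \<in> S" shows "\<alpha> \<bullet> (\<Sum>\<alpha>'\<in>S. t \<alpha>' *\<^sub>R fund_weight \<alpha>') = t \<alpha>"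
proof -
  have "\<alpha> \<bullet> (\<Sum>\<alpha>'\<in>S. t \<alpha>' *\<^sub>R fund_weight \<alpha>') = (\<Sum>\<alpha>'\<in>S. if \<alpha> = \<alpha>' then t \<alpha> else 0)"
    unfolding inner_sum_right by (rule sum.cong) (use a fund_weight in auto)
  also have "\<dots> = t \<alpha>" using a finite_S by (simp add: sum.delta)
  finally show ?thesis .
qed

lemma fund_weight_expansion: "x = (\<Sum>\<alpha>\<in>S. (\<alpha> \<bullet> x) *\<^sub>R fund_weight \<alpha>)"
proof -
  let ?d = "x - (\<Sum>\<alpha>\<in>S. (\<alpha> \<bullet> x) *\<^sub>R fund_weight \<alpha>)"
  have "\<alpha> \<bullet> ?d = 0" if "\<alpha> \<in> S" for \<alpha>
    using that by (simp add: inner_diff_right inner_fund_weight_comb[of _ "\<lambda>\<alpha>. \<alpha> \<bullet> x"])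
  then have "orthogonal ?d ?d"
    by (intro orthogonal_to_span[of ?d S]) (auto simp: S_spans orthogonal_def inner_commute)
  then show ?thesis by (simp add: orthogonal_self)
qed

definition positive_root :: "'a \<Rightarrow> bool" where
  "positive_root \<gamma> \<longleftrightarrow> \<gamma> \<in> R \<and> (\<exists>c. \<gamma> = (\<Sum>\<alpha>\<in>S. c \<alpha> *\<^sub>R \<alpha>) \<and> (\<forall>\<alpha>\<in>S. 0 \<le> c \<alpha>))"

lemma root_sign: "\<beta> \<in> R \<Longrightarrow> positive_root \<beta> \<or> positive_root (- \<beta>)"
proof -
  assume b: "\<beta> \<in> R"
  then obtain c where c: "\<beta> = (\<Sum>\<alpha>\<in>S. c \<alpha> *\<^sub>R \<alpha>)" "(\<forall>\<alpha>\<in>S. c \<alpha> \<ge> 0) \<or> (\<forall>\<alpha>\<in>S. c \<alpha> \<le> 0)"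
    using root_expansion by blast
  show ?thesis
  proof (cases "\<forall>\<alpha>\<in>S. c \<alpha> \<ge> 0")
    case True then show ?thesis using b c(1) unfolding positive_root_def by blast
  next
    case False
    then have "\<forall>\<alpha>\<in>S. 0 \<le> - c \<alpha>" using c(2) by auto
    moreover have "- \<beta> = (\<Sum>\<alpha>\<in>S. (- c \<alpha>) *\<^sub>R \<alpha>)" using c(1) by (simp add: sum_negf)
    ultimately have "positive_root (- \<beta>)"
      unfolding positive_root_def using neg_root[OF b] by (intro conjI exI[of _ "\<lambda>\<alpha>. - c \<alpha>"]) auto
    then show ?thesis ..
  qed
qed

lemma nonneg_comb_vanishing:
  assumes d: "\<forall>\<alpha>\<in>S. 0 \<le> d \<alpha>" and x: "\<forall>\<alpha>\<in>S. 0 \<le> \<alpha> \<bullet> x"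
    and z: "(\<Sum>\<alpha>\<in>S. d \<alpha> *\<^sub>R \<alpha>) \<bullet> x = 0" and a: "\<alpha> \<in> S" "0 < \<alpha> \<bullet> x"
  shows "d \<alpha> = 0"
proof -
  have "(\<Sum>\<alpha>\<in>S. d \<alpha> * (\<alpha> \<bullet> x)) = 0" using z by (simp add: inner_sum_left)
  moreover have "\<forall>\<alpha>\<in>S. 0 \<le> d \<alpha> * (\<alpha> \<bullet> x)" using d x by simp
  ultimately have "d \<alpha> * (\<alpha> \<bullet> x) = 0"
    using sum_nonneg_eq_0_iff[OF finite_S, of "\<lambda>\<alpha>. d \<alpha> * (\<alpha> \<bullet> x)"] a(1) by blast
  then show ?thesis using a(2) by simp
qed

lemma positive_root_nonneg: "positive_root \<gamma> \<Longrightarrow> \<forall>\<alpha>\<in>S. 0 \<le> \<alpha> \<bullet> x \<Longrightarrow> 0 \<le> \<gamma> \<bullet> x"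
  unfolding positive_root_def by (auto simp: inner_sum_left intro!: sum_nonneg)

lemma positive_root_pos: "positive_root \<gamma> \<Longrightarrow> \<forall>\<alpha>\<in>S. 0 < \<alpha> \<bullet> x \<Longrightarrow> 0 < \<gamma> \<bullet> x"
proof -
  assume "positive_root \<gamma>" and x: "\<forall>\<alpha>\<in>S. 0 < \<alpha> \<bullet> x"
  then obtain c where c: "\<gamma> \<in> R" "\<gamma> = (\<Sum>\<alpha>\<in>S. c \<alpha> *\<^sub>R \<alpha>)" "\<forall>\<alpha>\<in>S. 0 \<le> c \<alpha>"
    unfolding positive_root_def by blast
  have "0 \<le> \<gamma> \<bullet> x" using \<open>positive_root \<gamma>\<close> x by (simp add: positive_root_nonneg less_imp_le)
  moreover have "\<gamma> \<bullet> x \<noteq> 0"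
  proof
    assume "\<gamma> \<bullet> x = 0"
    then have "\<forall>\<alpha>\<in>S. c \<alpha> = 0"
      using nonneg_comb_vanishing[OF c(3), of x] x c(2) by (simp add: less_imp_le)
    then show False using c(2) root_nonzero[OF c(1)] by simp
  qed
  ultimately show ?thesis by simp
qed

lemma le_highest_root: "\<beta> \<in> R \<Longrightarrow> \<forall>\<alpha>\<in>S. 0 \<le> \<alpha> \<bullet> x \<Longrightarrow> \<beta> \<bullet> x \<le> am \<bullet> x"
proof -
  assume b: "\<beta> \<in> R" and x: "\<forall>\<alpha>\<in>S. 0 \<le> \<alpha> \<bullet> x"
  obtain d where d: "\<forall>\<alpha>\<in>S. d \<alpha> \<ge> 0" "am - \<beta> = (\<Sum>\<alpha>\<in>S. d \<alpha> *\<^sub>R \<alpha>)"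
    using am_highest[OF b] by blast
  have "0 \<le> (am - \<beta>) \<bullet> x" using d x by (auto simp: inner_sum_left intro!: sum_nonneg)
  then show ?thesis by (simp add: inner_diff_left)
qed

lemma Abar_iff: "x \<in> Abar \<longleftrightarrow> (\<forall>\<alpha>\<in>S. 0 \<le> \<alpha> \<bullet> x) \<and> am \<bullet> x \<le> 1"
  by (auto simp: Abar_def Walls_def wall_Some wall_None)

lemma Alc_iff: "x \<in> Alc \<longleftrightarrow> (\<forall>\<alpha>\<in>S. 0 < \<alpha> \<bullet> x) \<and> am \<bullet> x < 1"
  by (auto simp: Alc_def Walls_def wall_Some wall_None)

lemma Alc_Abar: "Alc \<subseteq> Abar" by (auto simp: Alc_def Abar_def less_imp_le)

lemma no_integer_in_0_1: "k \<in> \<int> \<Longrightarrow> 0 < k \<Longrightarrow> k < (1::real) \<Longrightarrow> False"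
  by (elim Ints_cases) simp

text \<open>Every root takes values in \<open>]-1, 1[\<close> on the alcove, so alcove points are regular.\<close>

lemma Alc_regular: "x \<in> Alc \<Longrightarrow> regular x"
  unfolding regular_def
proof (intro ballI notI)
  fix \<beta> and k :: real assume x: "x \<in> Alc" and b: "\<beta> \<in> R" and k: "k \<in> \<int>" and e: "\<beta> \<bullet> x = k"
  have xS: "\<forall>\<alpha>\<in>S. 0 < \<alpha> \<bullet> x" and xm: "am \<bullet> x < 1" using x Alc_iff by auto
  have strip: "0 < \<gamma> \<bullet> x \<and> \<gamma> \<bullet> x < 1" if "positive_root \<gamma>" for \<gamma>
    using positive_root_pos[OF that xS] le_highest_root[of \<gamma> x] that xS xm
    by (auto simp: positive_root_def less_imp_le)
  from root_sign[OF b] show False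
  proof
    assume "positive_root \<beta>" then show False using strip e k no_integer_in_0_1 by blast
  next
    assume "positive_root (- \<beta>)"
    then show False using strip[of "- \<beta>"] e k no_integer_in_0_1[of "- k"] by simp
  qed
qed

lemma S_nonempty: "S \<noteq> {}"
proof
  assume "S = {}"
  then have "(UNIV :: 'a set) = {0}" using S_spans by simp
  moreover obtain b :: 'a where "b \<in> Basis" using nonempty_Basis by blast
  ultimately show False using nonzero_Basis by blast
qed

definition rho :: 'a where "rho = (\<Sum>\<alpha>\<in>S. 1 *\<^sub>R fund_weight \<alpha>)"

lemma rho: "\<alpha> \<in> S \<Longrightarrow> \<alpha> \<bullet> rho = 1" unfolding rho_def by (rule inner_fund_weight_comb)

lemma am_rho: "am \<bullet> rho \<ge> 1"
proof -
  obtain a0 where a0: "a0 \<in> S" using S_nonempty by blast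
  have "a0 \<bullet> rho \<le> am \<bullet> rho" by (rule le_highest_root) (use a0 S_sub_R rho in auto)
  then show ?thesis using rho[OF a0] by simp
qed

lemma Alc_nonempty: "Alc \<noteq> {}"
proof -
  have "am \<bullet> rho > 0" using am_rho by simp
  then have "(1 / (2 * (am \<bullet> rho))) *\<^sub>R rho \<in> Alc"
    unfolding Alc_iff using rho by (auto simp: field_simps)
  then show ?thesis by blast
qed

text \<open>The closed alcove is a compact convex set; it lies in the box of points with
  simple-root coordinates in \<open>[0, 1]\<close>.\<close>

lemma Abar_bounded: "bounded Abar"
proof -
  have "norm x \<le> (\<Sum>\<alpha>\<in>S. norm (fund_weight \<alpha>))" if x: "x \<in> Abar" for x
  proof -
    have xS: "\<forall>\<alpha>\<in>S. 0 \<le> \<alpha> \<bullet> x" and xm: "am \<bullet> x \<le> 1" using x by (auto simp: Abar_iff)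
    have coord: "0 \<le> \<alpha> \<bullet> x \<and> \<alpha> \<bullet> x \<le> 1" if a: "\<alpha> \<in> S" for \<alpha>
      using le_highest_root[OF _ xS, of \<alpha>] S_sub_R a xS xm by force
    have "norm x = norm (\<Sum>\<alpha>\<in>S. (\<alpha> \<bullet> x) *\<^sub>R fund_weight \<alpha>)"
      by (subst fund_weight_expansion) simp
    also have "\<dots> \<le> (\<Sum>\<alpha>\<in>S. norm ((\<alpha> \<bullet> x) *\<^sub>R fund_weight \<alpha>))" by (rule norm_sum)
    also have "\<dots> \<le> (\<Sum>\<alpha>\<in>S. norm (fund_weight \<alpha>))"
      using coord by (intro sum_mono) (simp add: mult_left_le_one_le abs_of_nonneg)
    finally show ?thesis .
  qed
  then show ?thesis unfolding bounded_iff by blast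
qed

lemma Abar_closed: "closed Abar"
proof -
  have "Abar = (\<Inter>i\<in>Walls. {z. wall_root i \<bullet> z \<ge> wall_level i})"
    by (auto simp: Abar_def wall_def)
  then show ?thesis by (auto intro!: closed_INT closed_halfspace_ge)
qed

lemma Abar_compact: "compact Abar"
  using Abar_bounded Abar_closed compact_eq_bounded_closed by blast

lemma Abar_convex: "convex Abar"
  unfolding convex_def Abar_def
  by (auto simp: wall_affine_comb intro!: add_nonneg_nonneg mult_nonneg_nonneg)

lemma Abar_to_Alc:
  assumes p: "p \<in> Abar" and a: "a \<in> Alc" and t: "0 < t" "t \<le> 1"
  shows "p + t *\<^sub>R (a - p) \<in> Alc"
proof -
  have "p + t *\<^sub>R (a - p) = (1 - t) *\<^sub>R p + t *\<^sub>R a" by (simp add: algebra_simps)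
  moreover have "0 < (1 - t) * wall i p + t * wall i a" if "i \<in> Walls" for i
  proof -
    have "0 \<le> wall i p" "0 < wall i a" using p a that unfolding Abar_def Alc_def by auto
    then have "0 \<le> (1 - t) * wall i p" "0 < t * wall i a" using t by auto
    then show ?thesis by linarith
  qed
  ultimately show ?thesis unfolding Alc_def by (simp add: wall_affine_comb)
qed

definition generic_wall_point :: "'a option \<Rightarrow> 'a \<Rightarrow> bool" where
  "generic_wall_point i p \<longleftrightarrow> wall i p = 0 \<and>
     (\<forall>\<beta>\<in>R. \<forall>k\<in>\<int>. \<beta> \<bullet> p = k \<longrightarrow>
        (\<beta> = wall_root i \<and> k = wall_level i) \<or> (\<beta> = - wall_root i \<and> k = - wall_level i))"

text \<open>The hyperplane condition is symmetric under \<open>(\<beta>, k) \<mapsto> (-\<beta>, -k)\<close>, so it suffices to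
  check positive roots.\<close>

lemma generic_wall_pointI:
  assumes "wall i p = 0"
    and pos: "\<And>\<gamma> k. positive_root \<gamma> \<Longrightarrow> k \<in> \<int> \<Longrightarrow> \<gamma> \<bullet> p = k \<Longrightarrow>
               (\<gamma> = wall_root i \<and> k = wall_level i) \<or> (\<gamma> = - wall_root i \<and> k = - wall_level i)"
  shows "generic_wall_point i p"
  unfolding generic_wall_point_def
proof (intro conjI ballI impI assms(1))
  fix \<beta> and k :: real assume b: "\<beta> \<in> R" and k: "k \<in> \<int>" and e: "\<beta> \<bullet> p = k"
  from root_sign[OF b]
  show "(\<beta> = wall_root i \<and> k = wall_level i) \<or> (\<beta> = - wall_root i \<and> k = - wall_level i)"
  proof
    assume "positive_root (- \<beta>)"
    then have "(- \<beta> = wall_root i \<and> - k = wall_level i) \<or> (- \<beta> = - wall_root i \<and> - k = - wall_level i)"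
      using pos[of "- \<beta>" "- k"] k e by simp
    then show ?thesis by (metis minus_minus)
  qed (use pos k e in blast)
qed

text \<open>On the wall of \<open>\<alpha>\<^sub>0\<close>: the point \<open>rho / (am \<bullet> rho)\<close> has all simple-root coordinates
  positive, so only \<open>am\<close> can reach the value 1 there.\<close>

lemma generic_point_wall0: "\<exists>p\<in>Abar. generic_wall_point None p"
proof -
  define p where "p = (1 / (am \<bullet> rho)) *\<^sub>R rho"
  have amr: "am \<bullet> rho > 0" using am_rho by simp
  have pS: "\<forall>\<alpha>\<in>S. 0 < \<alpha> \<bullet> p" using amr rho by (simp add: p_def)
  have pm: "am \<bullet> p = 1" using amr by (simp add: p_def)
  have "generic_wall_point None p"
  proof (rule generic_wall_pointI)
    show "wall None p = 0" using pm by (simp add: wall_None)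
    fix \<gamma> and k :: real assume g: "positive_root \<gamma>" and k: "k \<in> \<int>" "\<gamma> \<bullet> p = k"
    have "0 < k" using positive_root_pos[OF g pS] k by simp
    moreover have "k \<le> 1"
      using le_highest_root[of \<gamma> p] g pS pm k by (simp add: positive_root_def less_imp_le)
    ultimately have kk: "k = 1" using no_integer_in_0_1[OF k(1)] by fastforce
    obtain d where d: "\<forall>\<alpha>\<in>S. d \<alpha> \<ge> 0" "am - \<gamma> = (\<Sum>\<alpha>\<in>S. d \<alpha> *\<^sub>R \<alpha>)"
      using am_highest[of \<gamma>] g unfolding positive_root_def by blast
    have "\<forall>\<alpha>\<in>S. d \<alpha> = 0"
      using nonneg_comb_vanishing[OF d(1), of p] pS d(2)[symmetric] pm k kk
      by (simp add: less_imp_le inner_diff_left)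
    then have "\<gamma> = am" using d(2) by simp
    then show "(\<gamma> = wall_root None \<and> k = wall_level None) \<or> (\<gamma> = - wall_root None \<and> k = - wall_level None)"
      using kk by simp
  qed
  moreover have "p \<in> Abar" using pS pm by (simp add: Abar_iff less_imp_le)
  ultimately show ?thesis by blast
qed

text \<open>On the wall of a simple root \<open>a0\<close>: a point with \<open>a0\<close>-coordinate 0, all other
  coordinates a small \<open>\<delta> > 0\<close>, and \<open>am \<bullet> p < 1\<close>.\<close>

lemma generic_point_simple_wall:
  assumes a0: "a0 \<in> S" shows "\<exists>p\<in>Abar. generic_wall_point (Some a0) p"
proof -
  define X where "X = (\<Sum>\<alpha>\<in>S. \<bar>am \<bullet> fund_weight \<alpha>\<bar>)"
  define \<delta> where "\<delta> = 1 / (1 + X)"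
  have X0: "X \<ge> 0" unfolding X_def by (simp add: sum_nonneg)
  have d0: "\<delta> > 0" using X0 by (simp add: \<delta>_def)
  define t where "t \<alpha> = (if \<alpha> = a0 then 0 else \<delta>)" for \<alpha>
  define p where "p = (\<Sum>\<alpha>\<in>S. t \<alpha> *\<^sub>R fund_weight \<alpha>)"
  have pS: "\<alpha> \<in> S \<Longrightarrow> \<alpha> \<bullet> p = t \<alpha>" for \<alpha> unfolding p_def by (rule inner_fund_weight_comb)
  have pS0: "\<forall>\<alpha>\<in>S. 0 \<le> \<alpha> \<bullet> p" using pS d0 by (simp add: t_def)
  have "am \<bullet> p = (\<Sum>\<alpha>\<in>S. t \<alpha> * (am \<bullet> fund_weight \<alpha>))" by (simp add: p_def inner_sum_right)
  also have "\<dots> \<le> (\<Sum>\<alpha>\<in>S. \<delta> * \<bar>am \<bullet> fund_weight \<alpha>\<bar>)"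
    by (rule sum_mono) (use d0 in \<open>auto simp: t_def intro: mult_left_mono\<close>)
  also have "\<dots> = \<delta> * X" by (simp add: X_def sum_distrib_left)
  also have "\<dots> < 1" using X0 by (simp add: \<delta>_def field_simps)
  finally have pm: "am \<bullet> p < 1" .
  have "generic_wall_point (Some a0) p"
  proof (rule generic_wall_pointI)
    show "wall (Some a0) p = 0" using pS[OF a0] by (simp add: wall_Some t_def)
    fix \<gamma> and k :: real assume g: "positive_root \<gamma>" and k: "k \<in> \<int>" "\<gamma> \<bullet> p = k"
    obtain c where c: "\<gamma> \<in> R" "\<gamma> = (\<Sum>\<alpha>\<in>S. c \<alpha> *\<^sub>R \<alpha>)" "\<forall>\<alpha>\<in>S. 0 \<le> c \<alpha>"
      using g unfolding positive_root_def by blast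
    have "0 \<le> k" using positive_root_nonneg[OF g pS0] k by simp
    moreover have "k < 1" using le_highest_root[OF c(1) pS0] pm k by simp
    ultimately have kk: "k = 0" using no_integer_in_0_1[OF k(1)] by fastforce
    have "\<forall>\<alpha>\<in>S. \<alpha> \<noteq> a0 \<longrightarrow> c \<alpha> = 0"
      using nonneg_comb_vanishing[OF c(3) pS0] c(2) k kk pS d0 by (simp add: t_def)
    then have "\<gamma> = (\<Sum>\<alpha>\<in>S. if \<alpha> = a0 then c a0 *\<^sub>R a0 else 0)"
      unfolding c(2) by (intro sum.cong) auto
    then have "\<gamma> = c a0 *\<^sub>R a0" using a0 finite_S by (simp add: sum.delta)
    moreover have "c a0 = 1 \<or> c a0 = -1" using reduced_R[of a0 "c a0"] c(1) a0 S_sub_R calculation by auto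
    ultimately show "(\<gamma> = wall_root (Some a0) \<and> k = wall_level (Some a0))
        \<or> (\<gamma> = - wall_root (Some a0) \<and> k = - wall_level (Some a0))"
      using kk by auto
  qed
  moreover have "p \<in> Abar" using pS0 pm by (simp add: Abar_iff)
  ultimately show ?thesis by blast
qed

lemma generic_wall_point: "i \<in> Walls \<Longrightarrow> \<exists>p\<in>Abar. generic_wall_point i p"
  unfolding Walls_def using generic_point_wall0 generic_point_simple_wall by blast

subsection \<open>The affine Weyl group acts freely on alcoves\<close>

lemma regular_segment_side:
  assumes b: "\<beta> \<in> R" "k \<in> \<int>" and x: "\<beta> \<bullet> x \<noteq> k"
    and seg: "\<And>t. 0 \<le> t \<Longrightarrow> t < 1 \<Longrightarrow> regular (x + t *\<^sub>R (p - x))"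
  shows "0 \<le> (\<beta> \<bullet> x - k) * (\<beta> \<bullet> p - k)"
proof (rule segment_sign)
  show "\<beta> \<bullet> x - k \<noteq> 0" using x by simp
  show "\<forall>t. 0 \<le> t \<longrightarrow> t < 1 \<longrightarrow> (\<beta> \<bullet> x - k) + t * ((\<beta> \<bullet> p - k) - (\<beta> \<bullet> x - k)) \<noteq> 0"
  proof (intro allI impI)
    fix t :: real assume "0 \<le> t" "t < 1"
    then have "\<beta> \<bullet> (x + t *\<^sub>R (p - x)) \<noteq> k" using seg b unfolding regular_def by blast
    then show "(\<beta> \<bullet> x - k) + t * ((\<beta> \<bullet> p - k) - (\<beta> \<bullet> x - k)) \<noteq> 0"
      by (simp add: inner_add_right inner_diff_right algebra_simps)
  qed
qed

text \<open>If a hyperplane of the arrangement separates an alcove point \<open>a\<close> from its mirror image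
  \<open>sref i a\<close>, it is wall \<open>i\<close> itself: the segments from \<open>a\<close> and from \<open>sref i a\<close> to a generic
  point \<open>p\<close> of wall \<open>i\<close> consist of regular points (except \<open>p\<close>), so the hyperplane must pass
  through \<open>p\<close>.\<close>

lemma separating_wall:
  assumes i: "i \<in> Walls" and b: "\<beta> \<in> R" and k: "k \<in> \<int>" and a: "a \<in> Alc"
    and neg: "(\<beta> \<bullet> a - k) * (\<beta> \<bullet> sref i a - k) < 0"
  shows "(\<beta> = wall_root i \<and> k = wall_level i) \<or> (\<beta> = - wall_root i \<and> k = - wall_level i)"
proof -
  obtain p where p: "p \<in> Abar" "generic_wall_point i p"
    using generic_wall_point[OF i] by blast
  have sp: "sref i p = p" using p(2) sref_fix by (simp add: generic_wall_point_def)
  have seg_a: "regular (a + t *\<^sub>R (p - a))" if "0 \<le> t" "t < 1" for t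
  proof -
    have "a + t *\<^sub>R (p - a) = p + (1 - t) *\<^sub>R (a - p)" by (simp add: algebra_simps)
    then show ?thesis using Abar_to_Alc[OF p(1) a, of "1 - t"] that Alc_regular by simp
  qed
  have seg_sa: "regular (sref i a + t *\<^sub>R (p - sref i a))" if "0 \<le> t" "t < 1" for t
    using Wa_regular[OF sref_in_Wa[OF i] seg_a[OF that]]
      affine_isometry_line[OF affine_isometry_sref[OF i], of a t p] sp by simp
  have "0 \<le> (\<beta> \<bullet> a - k) * (\<beta> \<bullet> p - k)"
    by (rule regular_segment_side[OF b k _ seg_a]) (use neg in auto)
  moreover have "0 \<le> (\<beta> \<bullet> sref i a - k) * (\<beta> \<bullet> p - k)"
    by (rule regular_segment_side[OF b k _ seg_sa]) (use neg in auto)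
  ultimately have "\<beta> \<bullet> p - k = 0" using opposite_signs_zero neg by blast
  then have "\<beta> \<bullet> p = k" by simp
  moreover have "\<forall>\<beta>\<in>R. \<forall>k\<in>\<int>. \<beta> \<bullet> p = k \<longrightarrow>
      (\<beta> = wall_root i \<and> k = wall_level i) \<or> (\<beta> = - wall_root i \<and> k = - wall_level i)"
    using p(2) unfolding generic_wall_point_def by (rule conjunct2)
  ultimately show ?thesis using b k by blast
qed

lemma conjugate_sref:
  assumes h: "h \<in> Wa" and i: "i \<in> Walls" and j: "j \<in> Walls" and eps: "\<epsilon> = 1 \<or> \<epsilon> = -1"
    and e: "\<And>z. wall i (h z) = \<epsilon> * wall j z"
  shows "sref i \<circ> h = h \<circ> sref j"
proof -
  obtain U b where U: "orthogonal_transformation U" "\<And>z. h z = U z + b"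
    using Wa_affine_isometry[OF h] unfolding affine_isometry_def by blast
  have l: "linear U" using U(1) orthogonal_transformation_linear by blast
  have ee: "\<epsilon> * \<epsilon> = 1" using eps by auto
  have lin: "wall_root i \<bullet> U z = \<epsilon> * (wall_root j \<bullet> z)" for z
  proof -
    have "wall i (h z) - wall i (h 0) = \<epsilon> * wall j z - \<epsilon> * wall j 0" using e by simp
    then show ?thesis using U(2) linear_0[OF l] by (simp add: wall_def inner_add_right algebra_simps)
  qed
  have Ub: "U (wall_root j) = \<epsilon> *\<^sub>R wall_root i"
  proof -
    obtain z where z: "U z = U (wall_root j) - \<epsilon> *\<^sub>R wall_root i"
      using orthogonal_transformation_surj[OF U(1)] by (metis surjD)
    have "(U (wall_root j) - \<epsilon> *\<^sub>R wall_root i) \<bullet> U z = wall_root j \<bullet> z - \<epsilon> * (\<epsilon> * (wall_root j \<bullet> z))"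
      using U(1) lin[of z] by (simp add: inner_diff_left orthogonal_transformation_def)
    also have "\<dots> = 0" using ee by (simp add: mult.assoc[symmetric])
    finally show ?thesis using z by simp
  qed
  have "U (wall_root j) \<bullet> U (wall_root j) = wall_root j \<bullet> wall_root j"
    using U(1) orthogonal_transformation_def by blast
  then have "\<epsilon> * \<epsilon> * (wall_root i \<bullet> wall_root i) = wall_root j \<bullet> wall_root j"
    using Ub by (simp add: mult.assoc)
  then have nn: "wall_root j \<bullet> wall_root j = wall_root i \<bullet> wall_root i" using ee by simp
  have Uc: "U (coroot (wall_root j)) = \<epsilon> *\<^sub>R coroot (wall_root i)"
    unfolding coroot_def using linear_scale[OF l] Ub nn by simp
  show ?thesis
  proof (rule ext)
    fix z
    have "(h \<circ> sref j) z = U z - wall j z *\<^sub>R U (coroot (wall_root j)) + b"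
      using U(2) by (simp add: sref_eq linear_diff[OF l] linear_scale[OF l])
    also have "\<dots> = (sref i \<circ> h) z" using U(2) Uc e by (simp add: sref_eq algebra_simps)
    finally show "(sref i \<circ> h) z = (h \<circ> sref j) z" by simp
  qed
qed

definition word_prod :: "'a option list \<Rightarrow> 'a \<Rightarrow> 'a" where
  "word_prod ws = foldr (\<lambda>i f. sref i \<circ> f) ws id"

lemma word_prod_Nil[simp]: "word_prod [] = id" by (simp add: word_prod_def)
lemma word_prod_Cons[simp]: "word_prod (i # ws) = sref i \<circ> word_prod ws" by (simp add: word_prod_def)
lemma word_prod_append: "word_prod (xs @ ys) = word_prod xs \<circ> word_prod ys"
  by (induction xs) (simp_all add: comp_assoc)

lemma word_prod_Wa: "set ws \<subseteq> Walls \<Longrightarrow> word_prod ws \<in> Wa"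
  by (induction ws) (auto intro: Wa_comp sref_in_Wa Wa_id)

lemma Wa_word_prod: "h \<in> Wa \<Longrightarrow> \<exists>ws. set ws \<subseteq> Walls \<and> h = word_prod ws"
  unfolding Wa_def
proof (induction h rule: generated.induct)
  case gen_id then show ?case by (intro exI[of _ "[]"]) simp
next
  case (gen_comp g w)
  then obtain ws i where "set ws \<subseteq> Walls" "w = word_prod ws" "i \<in> Walls" "g = sref i" by blast
  then show ?case by (intro exI[of _ "i # ws"]) simp
qed

text \<open>If wall \<open>i\<close> changes sign between \<open>t a\<close> and \<open>t (sref j a)\<close>, for an alcove point \<open>a\<close>,
  then by \<open>separating_wall\<close> the element \<open>t\<close> carries wall \<open>j\<close> onto wall \<open>i\<close>, hence
  conjugates \<open>sref j\<close> into \<open>sref i\<close>.\<close>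

lemma crossing_conjugation:
  assumes t: "t \<in> Wa" and i: "i \<in> Walls" and j: "j \<in> Walls" and a: "a \<in> Alc"
    and cross: "wall i (t a) * wall i (t (sref j a)) < 0"
  shows "sref i \<circ> t = t \<circ> sref j"
proof -
  obtain \<beta>' k' where bk: "\<beta>' \<in> R" "k' \<in> \<int>" "\<And>z. wall i (t z) = \<beta>' \<bullet> z - k'"
    using wall_comp_Wa[OF t i] by blast
  have "(\<beta>' \<bullet> a - k') * (\<beta>' \<bullet> sref j a - k') < 0" using cross by (simp add: bk(3))
  then have "(\<beta>' = wall_root j \<and> k' = wall_level j) \<or> (\<beta>' = - wall_root j \<and> k' = - wall_level j)"
    using separating_wall[OF j bk(1,2) a] by blast
  then obtain \<epsilon> where "\<epsilon> = 1 \<or> \<epsilon> = -1" "\<And>z. wall i (t z) = \<epsilon> * wall j z"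
  proof (elim disjE conjE)
    assume "\<beta>' = wall_root j" "k' = wall_level j"
    then show thesis using that[of 1] bk(3) by (simp add: wall_def)
  next
    assume "\<beta>' = - wall_root j" "k' = - wall_level j"
    then show thesis using that[of "-1"] bk(3) by (simp add: wall_def algebra_simps)
  qed
  then show ?thesis using conjugate_sref[OF t i j] by blast
qed

text \<open>Exchange argument: if a nonempty word \<open>i # ws\<close> maps an alcove point into the alcove,
  follow the sign of wall \<open>i\<close> along the partial products.  It is negative after the first
  letter and positive at the end, so some letter \<open>j\<close> makes it change sign; by
  \<open>crossing_conjugation\<close> this letter cancels against the first one.\<close>

lemma word_cancellation:
  assumes sI: "set (i # ws) \<subseteq> Walls" and a: "a \<in> Alc" "word_prod (i # ws) a \<in> Alc"
  shows "\<exists>ws'. set ws' \<subseteq> Walls \<and> length ws' < length (i # ws) \<and> word_prod ws' = word_prod (i # ws)"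
proof -
  define u where "u = i # ws"
  have i: "i \<in> Walls" using sI by simp
  define \<phi> where "\<phi> m = wall i (word_prod (take m u) a)" for m
  have tW: "word_prod (take m u) \<in> Wa" for m
    using set_take_subset[of m u] sI by (intro word_prod_Wa) (auto simp: u_def)
  have nz: "\<phi> m \<noteq> 0" for m
    unfolding \<phi>_def using regular_wall_nonzero[OF Wa_regular[OF tW Alc_regular[OF a(1)]] i] .
  have "\<phi> 1 < 0" using a(1) i by (simp add: \<phi>_def u_def Alc_def wall_sref)
  moreover have "0 < \<phi> (length u)" using a(2) i by (simp add: \<phi>_def u_def Alc_def)
  ultimately obtain m where m: "1 \<le> m" "m < length u" "\<phi> m < 0" "0 < \<phi> (Suc m)"
    using sign_change_index[of \<phi> 1 "length u", OF _ _ _ nz] by (auto simp: u_def)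
  define j where "j = u ! m"
  have j: "j \<in> Walls" using sI m(2) nth_mem[OF m(2)] by (auto simp: j_def u_def)
  define t where "t = word_prod (take m u)"
  have tj: "word_prod (take (Suc m) u) = t \<circ> sref j"
    using take_Suc_conv_app_nth[OF m(2)] by (simp add: j_def t_def word_prod_append)
  have "wall i (t a) * wall i (t (sref j a)) < 0"
    using m(3,4) tj by (simp add: \<phi>_def t_def mult_neg_pos)
  then have conj: "sref i \<circ> t = t \<circ> sref j"
    using crossing_conjugation[OF _ i j a(1)] tW by (simp add: t_def)
  have "take m u = i # take (m - 1) ws" using m(1) by (cases m) (auto simp: u_def)
  then have t_eq: "t = sref i \<circ> word_prod (take (m - 1) ws)" by (simp add: t_def)
  have "word_prod (take (Suc m) u) = sref i \<circ> t" using tj conj by simp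
  also have "\<dots> = (sref i \<circ> sref i) \<circ> word_prod (take (m - 1) ws)" by (simp add: t_eq comp_assoc)
  also have "\<dots> = word_prod (take (m - 1) ws)" using sref_invol[OF i] by simp
  finally have W: "word_prod (take (Suc m) u) = word_prod (take (m - 1) ws)" .
  define ws' where "ws' = take (m - 1) ws @ drop (Suc m) u"
  have "word_prod u = word_prod (take (Suc m) u @ drop (Suc m) u)" by simp
  also have "\<dots> = word_prod ws'" unfolding word_prod_append W ws'_def ..
  finally have prod: "word_prod ws' = word_prod u" by simp
  have "set ws' \<subseteq> set ws \<union> set u"
    using set_take_subset[of "m - 1" ws] set_drop_subset[of "Suc m" u] by (auto simp: ws'_def)
  then have set: "set ws' \<subseteq> Walls" using sI by (auto simp: u_def)
  have len: "length ws' < length u" using m(1,2) by (auto simp: ws'_def u_def min_def)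
  show ?thesis unfolding u_def[symmetric] using set len prod by blast
qed

lemma free_action_word:
  "set ws \<subseteq> Walls \<Longrightarrow> a \<in> Alc \<Longrightarrow> word_prod ws a \<in> Alc \<Longrightarrow> word_prod ws = id"
proof (induction ws arbitrary: a rule: length_induct)
  case (1 ws)
  show ?case
  proof (cases ws)
    case (Cons i rest)
    then obtain ws' where ws': "set ws' \<subseteq> Walls" "length ws' < length ws" "word_prod ws' = word_prod ws"
      using word_cancellation "1.prems" by blast
    then show ?thesis
      using "1.IH"[rule_format, OF ws'(2,1) "1.prems"(2)] "1.prems"(3) by simp
  qed simp
qed

lemma free_action: "h \<in> Wa \<Longrightarrow> a \<in> Alc \<Longrightarrow> h a \<in> Alc \<Longrightarrow> h = id"
  using Wa_word_prod[of h] free_action_word[of _ a] by blast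

subsection \<open>Local finiteness and the Dirichlet property of the alcove\<close>

lemma same_floor_side:
  assumes "k \<in> \<int>" "(x::real) \<noteq> k" "y \<noteq> k" "\<lfloor>x\<rfloor> = \<lfloor>y\<rfloor>" "x > k" shows "y > k"
proof -
  obtain n where n: "k = of_int n" using assms(1) Ints_cases by blast
  have "\<lfloor>x\<rfloor> \<ge> n" using assms(5) n by (simp add: le_floor_iff)
  then have "\<lfloor>y\<rfloor> \<ge> n" using assms(4) by simp
  then show ?thesis using assms(3) n by (simp add: le_floor_iff)
qed

text \<open>The orbit of an alcove point is determined by its integer parts \<open>\<lfloor>\<beta> \<bullet> h c\<rfloor>\<close>: equal
  integer parts mean \<open>h c\<close> and \<open>h' c\<close> lie in the same alcove, so \<open>h = h'\<close> by freeness.\<close>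

lemma floor_signature_inj:
  assumes c: "c \<in> Alc" and h: "h \<in> Wa" and h': "h' \<in> Wa"
    and fl: "\<And>\<beta>. \<beta> \<in> R \<Longrightarrow> \<lfloor>\<beta> \<bullet> h c\<rfloor> = \<lfloor>\<beta> \<bullet> h' c\<rfloor>"
  shows "h = h'"
proof -
  have hi: "inv h \<in> Wa" using Wa_inv[OF h] by blast
  have "inv h (h' c) \<in> Alc"
    unfolding Alc_def
  proof (intro CollectI ballI)
    fix i assume i: "i \<in> Walls"
    obtain \<beta>' k' where bk: "\<beta>' \<in> R" "k' \<in> \<int>" "\<And>z. wall i (inv h z) = \<beta>' \<bullet> z - k'"
      using wall_comp_Wa[OF hi i] by blast
    have "0 < wall i (inv h (h c))" using c i Wa_inv_apply[OF h] by (simp add: Alc_def)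
    then have "\<beta>' \<bullet> h c > k'" using bk(3) by simp
    moreover have "\<beta>' \<bullet> h c \<noteq> k'" "\<beta>' \<bullet> h' c \<noteq> k'"
      using Wa_regular[OF h Alc_regular[OF c]] Wa_regular[OF h' Alc_regular[OF c]] bk(1,2)
      by (auto simp: regular_def)
    ultimately have "\<beta>' \<bullet> h' c > k'" using same_floor_side[OF bk(2)] fl[OF bk(1)] by blast
    then show "0 < wall i (inv h (h' c))" using bk(3) by simp
  qed
  then have "inv h \<circ> h' = id" using free_action[OF Wa_comp[OF hi h'] c] by simp
  then have "h' = h" by (rule Wa_inv_comp_id[OF h])
  then show "h = h'" by simp
qed

lemma finite_orbit_ball_Alc:
  assumes c: "c \<in> Alc" shows "finite {h \<in> Wa. dist a (h c) \<le> r}"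
proof -
  define T where "T = {h \<in> Wa. dist a (h c) \<le> r}"
  define \<sigma> where "\<sigma> h = restrict (\<lambda>\<beta>. \<lfloor>\<beta> \<bullet> h c\<rfloor>) R" for h
  define N where "N = (\<Sum>\<beta>\<in>R. norm \<beta>) * (norm a + \<bar>r\<bar>)"
  have "\<sigma> ` T \<subseteq> PiE R (\<lambda>_. {\<lfloor>- N\<rfloor>..\<lceil>N\<rceil>})"
  proof (clarsimp simp: \<sigma>_def)
    fix h \<beta> assume h: "h \<in> T" and b: "\<beta> \<in> R"
    have "norm (h c) \<le> norm a + \<bar>r\<bar>"
      using h norm_triangle_ineq[of a "h c - a"] by (auto simp: T_def dist_norm norm_minus_commute)
    then have "\<bar>\<beta> \<bullet> h c\<bar> \<le> norm \<beta> * (norm a + \<bar>r\<bar>)"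
      by (intro order_trans[OF Cauchy_Schwarz_ineq2 mult_left_mono]) simp_all
    also have "\<dots> \<le> N"
      unfolding N_def by (rule mult_right_mono) (auto intro: member_le_sum finite_R b)
    finally have "- N \<le> \<beta> \<bullet> h c" "\<beta> \<bullet> h c \<le> N" by auto
    then have "\<lfloor>- N\<rfloor> \<le> \<lfloor>\<beta> \<bullet> h c\<rfloor>" "\<lfloor>\<beta> \<bullet> h c\<rfloor> \<le> \<lfloor>N\<rfloor>" by (auto intro: floor_mono)
    then show "\<lfloor>- N\<rfloor> \<le> \<lfloor>\<beta> \<bullet> h c\<rfloor> \<and> \<lfloor>\<beta> \<bullet> h c\<rfloor> \<le> \<lceil>N\<rceil>"
      using floor_le_ceiling[of N] by linarith
  qed
  then have "finite (\<sigma> ` T)"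
    by (rule finite_subset) (intro finite_PiE finite_R finite_atLeastAtMost_int)
  moreover have "inj_on \<sigma> T"
  proof (rule inj_onI)
    fix h h' assume h: "h \<in> T" "h' \<in> T" and e: "\<sigma> h = \<sigma> h'"
    have "\<lfloor>\<beta> \<bullet> h c\<rfloor> = \<lfloor>\<beta> \<bullet> h' c\<rfloor>" if "\<beta> \<in> R" for \<beta>
      using fun_cong[OF e, of \<beta>] that by (simp add: \<sigma>_def)
    then show "h = h'" using floor_signature_inj[OF c] h by (simp add: T_def)
  qed
  ultimately show ?thesis using finite_imageD T_def by blast
qed

lemma finite_orbit_ball: "finite {h \<in> Wa. dist a (h y) \<le> r}"
proof -
  obtain c where c: "c \<in> Alc" using Alc_nonempty by blast
  have "{h \<in> Wa. dist a (h y) \<le> r} \<subseteq> {h \<in> Wa. dist a (h c) \<le> r + dist y c}"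
  proof clarify
    fix h assume h: "h \<in> Wa" "dist a (h y) \<le> r"
    have "dist a (h c) \<le> dist a (h y) + dist (h y) (h c)" by (rule dist_triangle)
    then show "dist a (h c) \<le> r + dist y c"
      using h affine_isometry_dist[OF Wa_affine_isometry[OF h(1)]] by simp
  qed
  then show ?thesis using finite_orbit_ball_Alc[OF c] finite_subset by blast
qed

lemma dist_sref_sq:
  assumes i: "i \<in> Walls"
  shows "(a - sref i y) \<bullet> (a - sref i y)
       = (a - y) \<bullet> (a - y) + 4 * wall i a * wall i y / (wall_root i \<bullet> wall_root i)"
proof -
  define \<beta> where "\<beta> = wall_root i"
  define n where "n = \<beta> \<bullet> \<beta>"
  have n0: "n \<noteq> 0" using wall_root_nonzero[OF i] by (simp add: n_def \<beta>_def)
  define f where "f = wall i y"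
  define g where "g = wall i a"
  have ay: "\<beta> \<bullet> (a - y) = g - f" by (simp add: f_def g_def wall_def \<beta>_def inner_diff_right)
  have c: "coroot \<beta> = (2 / n) *\<^sub>R \<beta>" by (simp add: coroot_def n_def)
  have "a - sref i y = (a - y) + f *\<^sub>R coroot \<beta>" by (simp add: sref_eq f_def \<beta>_def)
  also have "\<dots> = (a - y) + (f * (2 / n)) *\<^sub>R \<beta>" by (simp add: c)
  finally have agy: "a - sref i y = (a - y) + (f * (2 / n)) *\<^sub>R \<beta>" .
  have sq: "(u + c *\<^sub>R \<beta>) \<bullet> (u + c *\<^sub>R \<beta>) = u \<bullet> u + 2 * c * (\<beta> \<bullet> u) + c * c * n" for u c
  proof -
    have "(u + c *\<^sub>R \<beta>) \<bullet> (u + c *\<^sub>R \<beta>) = u \<bullet> u + c * (u \<bullet> \<beta>) + c * (\<beta> \<bullet> u) + c * c * (\<beta> \<bullet> \<beta>)"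
      by (simp add: inner_add_left inner_add_right distrib_left)
    then show ?thesis by (simp add: inner_commute[of u \<beta>] n_def)
  qed
  have "(a - sref i y) \<bullet> (a - sref i y) =
     (a - y) \<bullet> (a - y) + 2 * (f * (2 / n)) * (\<beta> \<bullet> (a - y)) + (f * (2 / n)) * (f * (2 / n)) * n"
    unfolding agy by (rule sq)
  also have "\<dots> = (a - y) \<bullet> (a - y) + 4 * g * f / n" using n0 by (simp add: ay field_simps)
  finally show ?thesis by (simp add: f_def g_def n_def \<beta>_def)
qed

lemma sref_closer:
  assumes i: "i \<in> Walls" and y: "wall i y < 0" and a: "0 < wall i a"
  shows "dist a (sref i y) < dist a y"
proof -
  have "0 < wall_root i \<bullet> wall_root i" using wall_root_nonzero[OF i] by simp
  then have "4 * wall i a * wall i y / (wall_root i \<bullet> wall_root i) < 0"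
    using y a by (simp add: divide_neg_pos mult_pos_neg)
  then have "(a - sref i y) \<bullet> (a - sref i y) < (a - y) \<bullet> (a - y)" using dist_sref_sq[OF i] by simp
  then show ?thesis by (simp add: dist_norm norm_eq_sqrt_inner)
qed

lemma generated_sub_Wa: "J \<subseteq> Walls \<Longrightarrow> generated (sref ` J) \<subseteq> Wa"
  unfolding Wa_def by (intro generated_mono) auto

text \<open>Folding: the subgroup generated by the reflections in a set \<open>J\<close> of walls moves any point
  onto the positive side of all walls in \<open>J\<close>; take an image nearest to an alcove point.\<close>

lemma fold_into_chamber:
  assumes J: "J \<subseteq> Walls" and a: "a \<in> Alc"
  shows "\<exists>s \<in> generated (sref ` J). \<forall>i\<in>J. 0 \<le> wall i (s y)"
proof -
  define T where "T = {s \<in> generated (sref ` J). dist a (s y) \<le> dist a y}"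
  have "T \<subseteq> {h\<in>Wa. dist a (h y) \<le> dist a y}" using generated_sub_Wa[OF J] by (auto simp: T_def)
  then have fT: "finite T" using finite_orbit_ball finite_subset by blast
  have "id \<in> T" by (simp add: T_def generated.gen_id)
  then have T: "T \<noteq> {}" by blast
  define s where "s = arg_min_on (\<lambda>s. dist a (s y)) T"
  have sT: "s \<in> T" unfolding s_def by (rule arg_min_if_finite(1)[OF fT T])
  have s_min: "dist a (s y) \<le> dist a (s' y)" if "s' \<in> T" for s'
    unfolding s_def by (rule arg_min_least[OF fT T that, of "\<lambda>s. dist a (s y)"])
  have "0 \<le> wall i (s y)" if i: "i \<in> J" for i
  proof (rule ccontr)
    assume "\<not> 0 \<le> wall i (s y)"
    then have closer: "dist a (sref i (s y)) < dist a (s y)"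
      using sref_closer[of i] a i J by (auto simp: Alc_def)
    then have "sref i \<circ> s \<in> T"
      using sT i by (auto simp: T_def intro: generated.gen_comp)
    then show False using s_min closer by fastforce
  qed
  then show ?thesis using sT by (auto simp: T_def)
qed

text \<open>An element of \<open>Wa\<close> bringing an alcove point \<open>c\<close> as close as possible to an alcove
  point \<open>a\<close> is the identity: otherwise \<open>g c\<close> is outside the alcove and a wall reflection
  brings it closer.\<close>

lemma orbit_minimizer_id:
  assumes a: "a \<in> Alc" and c: "c \<in> Alc" and g: "g \<in> Wa"
    and g_min: "\<And>g'. g' \<in> Wa \<Longrightarrow> dist a (g c) \<le> dist a (g' c)"
  shows "g = id"
proof (rule ccontr)
  assume "g \<noteq> id"
  then have "g c \<notin> Alc" using free_action[OF g c] by blast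
  then obtain i where i: "i \<in> Walls" "\<not> 0 < wall i (g c)" by (auto simp: Alc_def)
  have "wall i (g c) \<noteq> 0"
    using regular_wall_nonzero[OF Wa_regular[OF g Alc_regular[OF c]] i(1)] .
  then have "dist a (sref i (g c)) < dist a (g c)"
    using sref_closer[OF i(1)] i(2) a i(1) by (simp add: Alc_def)
  then show False using g_min[OF Wa_comp[OF sref_in_Wa[OF i(1)] g]] by simp
qed

lemma dirichlet_strict:
  assumes a: "a \<in> Alc" and c: "c \<in> Alc" and h: "h \<in> Wa" "h \<noteq> id"
  shows "dist a c < dist a (h c)"
proof -
  define T where "T = {h \<in> Wa. dist a (h c) \<le> dist a c}"
  have fT: "finite T" using finite_orbit_ball_Alc[OF c] by (simp add: T_def)
  have "id \<in> T" by (simp add: T_def Wa_id)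
  then have T: "T \<noteq> {}" by blast
  define g where "g = arg_min_on (\<lambda>g. dist a (g c)) T"
  have gT: "g \<in> T" unfolding g_def by (rule arg_min_if_finite(1)[OF fT T])
  have g_glob: "dist a (g c) \<le> dist a (g' c)" if "g' \<in> Wa" for g'
  proof (cases "g' \<in> T")
    case True
    show ?thesis unfolding g_def by (rule arg_min_least[OF fT T True, of "\<lambda>g. dist a (g c)"])
  next
    case False then show ?thesis using gT that by (auto simp: T_def)
  qed
  have "g \<in> Wa" using gT by (simp add: T_def)
  then have "g = id" using orbit_minimizer_id[OF a c] g_glob by blast
  then have g_min: "dist a c \<le> dist a (g' c)" if "g' \<in> Wa" for g'
    using g_glob[OF that] by simp
  show ?thesis
  proof (rule ccontr)
    assume "\<not> dist a c < dist a (h c)"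
    then have "dist a (h c) \<le> dist a (g' c)" if "g' \<in> Wa" for g'
      using g_min[OF that] by linarith
    then show False using orbit_minimizer_id[OF a c h(1)] h(2) by blast
  qed
qed

text \<open>By continuity the Dirichlet inequality extends (non-strictly) to the closed alcove.\<close>

lemma dirichlet_closure:
  assumes p: "p \<in> Abar" and q: "q \<in> Abar" and h: "h \<in> Wa"
  shows "dist p q \<le> dist p (h q)"
proof (cases "h = id")
  case False
  obtain a where a: "a \<in> Alc" using Alc_nonempty by blast
  define P where "P t = p + t *\<^sub>R (a - p)" for t :: real
  define Q where "Q t = q + t *\<^sub>R (a - q)" for t :: real
  have line: "((\<lambda>t. u + t *\<^sub>R v) \<longlongrightarrow> u) (at_right 0)" for u v :: 'a
  proof -
    have "((\<lambda>t. u + t *\<^sub>R v) \<longlongrightarrow> u + (0::real) *\<^sub>R v) (at_right 0)"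
      by (intro tendsto_add tendsto_const tendsto_scaleR tendsto_ident_at)
    then show ?thesis by simp
  qed
  have "isCont h q"
    using affine_isometry_continuous[OF Wa_affine_isometry[OF h]] continuous_on_eq_continuous_at open_UNIV
    by blast
  then have hQ: "((\<lambda>t. h (Q t)) \<longlongrightarrow> h q) (at_right 0)"
    unfolding Q_def by (rule isCont_tendsto_compose) (rule line)
  have ev: "eventually (\<lambda>t. dist (P t) (Q t) \<le> dist (P t) (h (Q t))) (at_right 0)"
    unfolding eventually_at_right_field
  proof (intro exI[of _ 1] conjI allI impI)
    fix t :: real assume t: "0 < t" "t < 1"
    then have "P t \<in> Alc" "Q t \<in> Alc"
      using Abar_to_Alc[OF p a] Abar_to_Alc[OF q a] by (auto simp: P_def Q_def)
    then show "dist (P t) (Q t) \<le> dist (P t) (h (Q t))"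
      using dirichlet_strict[OF _ _ h False] less_imp_le by blast
  qed simp
  have l1: "((\<lambda>t. dist (P t) (Q t)) \<longlongrightarrow> dist p q) (at_right 0)"
    unfolding P_def Q_def by (intro tendsto_dist line)
  have l2: "((\<lambda>t. dist (P t) (h (Q t))) \<longlongrightarrow> dist p (h q)) (at_right 0)"
    unfolding P_def by (intro tendsto_dist line hQ)
  show ?thesis by (rule tendsto_le[OF trivial_limit_at_right_real l2 l1 ev])
qed simp

text \<open>Disjointness of the sets \<open>V\<^sub>w\<close>: if \<open>x - w x = x' - w' x'\<close> with \<open>x, x'\<close> in the
  alcove, then \<open>dist x x' = dist x (g x')\<close> for \<open>g = w\<^sup>-\<^sup>1 w'\<close>, forcing \<open>g = id\<close>.\<close>

lemma difference_determines_element: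
  assumes w: "w \<in> Wa" and w': "w' \<in> Wa" and x: "x \<in> Alc" and x': "x' \<in> Alc"
    and e: "x - w x = x' - w' x'"
  shows "w = w'"
proof -
  define g where "g = inv w \<circ> w'"
  have g: "g \<in> Wa" using Wa_comp[OF _ w'] Wa_inv[OF w] by (simp add: g_def)
  have "dist x x' = dist (w x) (w' x')"
  proof -
    have "w x - w' x' = x - x'" using e by (simp add: algebra_simps)
    then show ?thesis by (simp add: dist_norm)
  qed
  also have "\<dots> = dist (inv w (w x)) (inv w (w' x'))"
    using affine_isometry_dist[OF Wa_affine_isometry, of "inv w"] Wa_inv[OF w] by simp
  also have "\<dots> = dist x (g x')" using Wa_inv_apply[OF w] by (simp add: g_def)
  finally have "g = id" using dirichlet_strict[OF x x' g] by fastforce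
  then have "w' = w" using Wa_inv_comp_id[OF w] by (simp add: g_def)
  then show ?thesis by simp
qed

subsection \<open>A solution in the closed alcove\<close>

definition fold_alcove :: "'a \<Rightarrow> 'a" where
  "fold_alcove y = (SOME q. q \<in> Abar \<and> (\<exists>h\<in>Wa. q = h y))"

lemma fold_alcove: "fold_alcove y \<in> Abar \<and> (\<exists>h\<in>Wa. fold_alcove y = h y)"
proof -
  obtain a where a: "a \<in> Alc" using Alc_nonempty by blast
  obtain s where s: "s \<in> generated (sref ` Walls)" "\<forall>i\<in>Walls. 0 \<le> wall i (s y)"
    using fold_into_chamber[OF order_refl a] by blast
  then have "s y \<in> Abar \<and> (\<exists>h\<in>Wa. s y = h y)" by (auto simp: Abar_def Wa_def)
  then show ?thesis unfolding fold_alcove_def by (rule someI)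
qed

text \<open>The folding map is 1-Lipschitz, by the Dirichlet inequality on the closed alcove.\<close>

lemma fold_alcove_nonexpansive: "dist (fold_alcove y1) (fold_alcove y2) \<le> dist y1 y2"
proof -
  obtain h1 where h1: "h1 \<in> Wa" "fold_alcove y1 = h1 y1" using fold_alcove by blast
  obtain h2 where h2: "h2 \<in> Wa" "fold_alcove y2 = h2 y2" using fold_alcove by blast
  have g: "h1 \<circ> inv h2 \<in> Wa" using Wa_comp[OF h1(1)] Wa_inv[OF h2(1)] by blast
  have "dist (fold_alcove y1) (fold_alcove y2) \<le> dist (fold_alcove y1) ((h1 \<circ> inv h2) (fold_alcove y2))"
    using dirichlet_closure[OF _ _ g] fold_alcove by blast
  also have "\<dots> = dist (h1 y1) (h1 y2)" using h1(2) h2 Wa_inv_apply[OF h2(1)] by simp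
  also have "\<dots> = dist y1 y2" using affine_isometry_dist[OF Wa_affine_isometry[OF h1(1)]] .
  finally show ?thesis .
qed

text \<open>Brouwer's theorem for \<open>z \<mapsto> fold_alcove (z - v)\<close> on the closed alcove: a fixed point
  \<open>x = h (x - v)\<close> gives \<open>x - h\<^sup>-\<^sup>1 x = v\<close>.\<close>

lemma solution_in_closure: "\<exists>x\<in>Abar. \<exists>w\<in>Wa. x - w x = v"
proof -
  have "dist (fold_alcove (x - v)) (fold_alcove (y - v)) \<le> dist x y" for x y
    using fold_alcove_nonexpansive[of "x - v" "y - v"] by (simp add: dist_norm)
  then have "continuous_on Abar (\<lambda>x. fold_alcove (x - v))"
    by (intro lipschitz_on_continuous_on[of 1]) (simp add: lipschitz_on_def)
  then obtain x where x: "x \<in> Abar" "fold_alcove (x - v) = x"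
    using brouwer[OF Abar_compact Abar_convex] Alc_nonempty Alc_Abar fold_alcove by blast
  obtain h where h: "h \<in> Wa" "x = h (x - v)" using fold_alcove x(2) by metis
  then have "inv h x = x - v" using Wa_inv_apply[OF h(1)] by metis
  then show ?thesis using x(1) Wa_inv[OF h(1)] by (intro bexI[of _ x] bexI[of _ "inv h"]) auto
qed

end

subsection \<open>Leaving the walls\<close>

locale wall_descent = affine_root_data +
  fixes x0 :: 'a and w0 :: "'a \<Rightarrow> 'a"
  assumes x0_Abar: "x0 \<in> Abar" and w0_Wa: "w0 \<in> Wa"
begin

definition walls_x0 :: "'a option set" where "walls_x0 = {i \<in> Walls. wall i x0 = 0}"
definition Stab :: "('a \<Rightarrow> 'a) set" where "Stab = generated (sref ` walls_x0)"
definition chamber_x0 :: "'a set" where "chamber_x0 = {p. \<forall>i\<in>walls_x0. 0 \<le> wall i p}"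

lemma walls_x0_sub: "walls_x0 \<subseteq> Walls" by (auto simp: walls_x0_def)
lemma finite_walls_x0: "finite walls_x0" using finite_subset[OF walls_x0_sub finite_Walls] .
lemma wall_x0: "i \<in> walls_x0 \<Longrightarrow> wall i x0 = 0" by (simp add: walls_x0_def)
lemma wall_x0_pos: "i \<in> Walls \<Longrightarrow> i \<notin> walls_x0 \<Longrightarrow> 0 < wall i x0"
  using x0_Abar by (force simp: Abar_def walls_x0_def)

lemma Stab_Wa: "s \<in> Stab \<Longrightarrow> s \<in> Wa"
  using generated_sub_Wa[OF walls_x0_sub] by (auto simp: Stab_def)

lemma Stab_comp: "s \<in> Stab \<Longrightarrow> s' \<in> Stab \<Longrightarrow> s \<circ> s' \<in> Stab"
  unfolding Stab_def by (rule generated_comp)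

lemma Stab_inv: "s \<in> Stab \<Longrightarrow> inv s \<in> Stab \<and> inv s \<circ> s = id \<and> s \<circ> inv s = id"
  unfolding Stab_def using walls_x0_sub by (intro generated_inv) (auto intro: sref_invol)

lemma Stab_fix: "s \<in> Stab \<Longrightarrow> \<forall>i\<in>walls_x0. wall i z = 0 \<Longrightarrow> s z = z"
  unfolding Stab_def by (erule generated_preserves) (auto simp: sref_fix)

lemma Stab_fix_x0: "s \<in> Stab \<Longrightarrow> s x0 = x0"
  using Stab_fix wall_x0 by blast

definition local_fold :: "'a \<Rightarrow> 'a" where
  "local_fold p = (SOME q. q \<in> chamber_x0 \<and> (\<exists>s\<in>Stab. q = s p))"

lemma local_fold: "local_fold p \<in> chamber_x0 \<and> (\<exists>s\<in>Stab. local_fold p = s p)"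
proof -
  obtain a where a: "a \<in> Alc" using Alc_nonempty by blast
  obtain s where "s \<in> Stab" "s p \<in> chamber_x0"
    using fold_into_chamber[OF walls_x0_sub a, of p] unfolding Stab_def chamber_x0_def by blast
  then have "s p \<in> chamber_x0 \<and> (\<exists>s'\<in>Stab. s p = s' p)" by blast
  then show ?thesis unfolding local_fold_def by (rule someI)
qed

lemma near_x0_Abar:
  assumes p: "p \<in> chamber_x0"
  shows "eventually (\<lambda>e. x0 + e *\<^sub>R (p - x0) \<in> Abar) (at_right 0)"
proof -
  have "eventually (\<lambda>e. 0 \<le> wall i (x0 + e *\<^sub>R (p - x0))) (at_right 0)" if i: "i \<in> Walls" for i
  proof (cases "i \<in> walls_x0")
    case True
    have d: "0 \<le> wall_root i \<bullet> (p - x0)"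
      using p True wall_x0 by (simp add: chamber_x0_def wall_def inner_diff_right)
    show ?thesis
      using eventually_at_right_less[of "0::real"]
    proof (rule eventually_mono)
      fix e :: real assume "0 < e"
      then show "0 \<le> wall i (x0 + e *\<^sub>R (p - x0))" using d True by (simp add: wall_line wall_x0)
    qed
  next
    case False
    show ?thesis
      using eventually_pos_at_right_0[OF wall_x0_pos[OF i False], of "wall_root i \<bullet> (p - x0)"]
      by (rule eventually_mono) (simp add: wall_line less_imp_le)
  qed
  then have "eventually (\<lambda>e. \<forall>i\<in>Walls. 0 \<le> wall i (x0 + e *\<^sub>R (p - x0))) (at_right 0)"
    by (intro eventually_ball_finite[OF finite_Walls]) blast
  then show ?thesis by (simp add: Abar_def)
qed

text \<open>Scaling the closed-alcove Dirichlet inequality at \<open>x0\<close> gives its local version on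
  the chamber, for the stabiliser.\<close>

lemma local_dirichlet:
  assumes p: "p1 \<in> chamber_x0" "p2 \<in> chamber_x0" and s: "s \<in> Stab"
  shows "dist p1 p2 \<le> dist p1 (s p2)"
proof -
  obtain e where e: "0 < e" "x0 + e *\<^sub>R (p1 - x0) \<in> Abar \<and> x0 + e *\<^sub>R (p2 - x0) \<in> Abar"
    using eventually_at_right_0_witness[OF eventually_conj[OF near_x0_Abar[OF p(1)] near_x0_Abar[OF p(2)]]]
    by blast
  have sW: "s \<in> Wa" using Stab_Wa[OF s] .
  have scale: "dist (x0 + e *\<^sub>R (q1 - x0)) (x0 + e *\<^sub>R (q2 - x0)) = e * dist q1 q2" for q1 q2
    using e(1) by (simp add: dist_norm algebra_simps flip: scaleR_diff_right)
  have s_line: "s (x0 + e *\<^sub>R (p2 - x0)) = x0 + e *\<^sub>R (s p2 - x0)"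
    using affine_isometry_line[OF Wa_affine_isometry[OF sW]] Stab_fix_x0[OF s] by simp
  have "e * dist p1 p2 = dist (x0 + e *\<^sub>R (p1 - x0)) (x0 + e *\<^sub>R (p2 - x0))"
    by (rule scale[symmetric])
  also have "\<dots> \<le> dist (x0 + e *\<^sub>R (p1 - x0)) (s (x0 + e *\<^sub>R (p2 - x0)))"
    using dirichlet_closure[OF _ _ sW] e(2) by blast
  also have "\<dots> = e * dist p1 (s p2)" unfolding s_line by (rule scale)
  finally show ?thesis using e(1) by simp
qed

lemma local_fold_nonexpansive: "dist (local_fold p1) (local_fold p2) \<le> dist p1 p2"
proof -
  obtain s1 where s1: "s1 \<in> Stab" "local_fold p1 = s1 p1" using local_fold by blast
  obtain s2 where s2: "s2 \<in> Stab" "local_fold p2 = s2 p2" using local_fold by blast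
  have g: "s1 \<circ> inv s2 \<in> Stab" using Stab_comp[OF s1(1)] Stab_inv[OF s2(1)] by blast
  have "dist (local_fold p1) (local_fold p2) \<le> dist (local_fold p1) ((s1 \<circ> inv s2) (local_fold p2))"
    using local_dirichlet[OF _ _ g] local_fold by blast
  also have "\<dots> = dist (s1 p1) (s1 p2)" using s1(2) s2 Wa_inv_apply[OF Stab_Wa[OF s2(1)]] by simp
  also have "\<dots> = dist p1 p2" using affine_isometry_dist[OF Wa_affine_isometry[OF Stab_Wa[OF s1(1)]]] .
  finally show ?thesis .
qed

text \<open>A
  direction \<open>z\<close> fixed by \<open>dir_map\<close> keeps \<open>x0 + e z\<close> a solution.\<close>

definition rot :: "'a \<Rightarrow> 'a" where "rot z = inv w0 (w0 x0 + z) - x0"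
definition dir_map :: "'a \<Rightarrow> 'a" where "dir_map z = local_fold (x0 + rot z) - x0"

lemma rot_orthogonal: "orthogonal_transformation rot"
proof -
  have "affine_isometry (inv w0)" using Wa_affine_isometry Wa_inv[OF w0_Wa] by blast
  then have "orthogonal_transformation (\<lambda>z. inv w0 (w0 x0 + z) - inv w0 (w0 x0))"
    by (rule affine_isometry_linear_part)
  moreover have "rot = (\<lambda>z. inv w0 (w0 x0 + z) - inv w0 (w0 x0))"
    using Wa_inv_apply[OF w0_Wa] by (simp add: rot_def fun_eq_iff)
  ultimately show ?thesis by simp
qed

lemma dir_map_fixed:
  assumes "dir_map z = z" obtains s where "s \<in> Stab" "s (x0 + rot z) = x0 + z"
proof -
  obtain s where s: "s \<in> Stab" "local_fold (x0 + rot z) = s (x0 + rot z)" using local_fold by blast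
  then have "s (x0 + rot z) - x0 = z" using assms by (simp add: dir_map_def)
  then have "s (x0 + rot z) = x0 + z" by (metis add.commute diff_add_cancel)
  then show thesis using that s(1) by blast
qed

lemma dir_map_norm: "norm (dir_map z) = norm z"
proof -
  obtain s where s: "s \<in> Stab" "local_fold (x0 + rot z) = s (x0 + rot z)" using local_fold by blast
  have "norm (dir_map z) = dist (s (x0 + rot z)) (s x0)"
    using s Stab_fix_x0[OF s(1)] by (simp add: dir_map_def dist_norm)
  also have "\<dots> = norm (rot z)"
    using affine_isometry_dist[OF Wa_affine_isometry[OF Stab_Wa[OF s(1)]]] by (simp add: dist_norm)
  also have "\<dots> = norm z" using rot_orthogonal orthogonal_transformation_norm by blast
  finally show ?thesis .
qed

lemma dir_map_continuous: "continuous_on X dir_map"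
proof -
  have "continuous_on UNIV local_fold"
    by (rule lipschitz_on_continuous_on[of 1]) (simp add: lipschitz_on_def local_fold_nonexpansive)
  moreover have "linear rot" using rot_orthogonal orthogonal_transformation_linear by blast
  then have "continuous_on UNIV (\<lambda>z. x0 + rot z)"
    by (intro continuous_intros linear_continuous_on) (simp add: linear_conv_bounded_linear)
  ultimately have "continuous_on UNIV (\<lambda>z. local_fold (x0 + rot z))"
    by (rule continuous_on_compose2) simp
  then have "continuous_on UNIV dir_map"
    unfolding dir_map_def by (intro continuous_intros)
  then show ?thesis by (rule continuous_on_subset) simp
qed

text \<open>\<open>fixed_dirs\<close>: directions along all walls through \<open>x0\<close> that \<open>rot\<close> fixes; along them
  nothing can be gained.  \<open>dir_cone\<close>: directions orthogonal to them pointing into the local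
  chamber.\<close>

definition fixed_dirs :: "'a set" where
  "fixed_dirs = {m. (\<forall>i\<in>walls_x0. wall_root i \<bullet> m = 0) \<and> rot m = m}"

definition dir_cone :: "'a set" where
  "dir_cone = {z. (\<forall>m\<in>fixed_dirs. z \<bullet> m = 0) \<and> (\<forall>i\<in>walls_x0. 0 \<le> wall_root i \<bullet> z)}"

lemma subspace_fixed_dirs: "subspace fixed_dirs"
proof -
  have lin: "linear rot" using rot_orthogonal orthogonal_transformation_linear by blast
  show ?thesis
    by (auto simp: subspace_def fixed_dirs_def inner_add_right
        linear_add[OF lin] linear_scale[OF lin] linear_0[OF lin])
qed

lemma dir_cone_convex_cone: "convex_cone dir_cone"
  unfolding convex_cone_iff dir_cone_def
  by (auto simp: inner_add_left inner_add_right)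

lemma dir_cone_closed: "closed dir_cone"
proof -
  have "dir_cone = (\<Inter>m\<in>fixed_dirs. {z. m \<bullet> z = 0}) \<inter> (\<Inter>i\<in>walls_x0. {z. wall_root i \<bullet> z \<ge> 0})"
    by (auto simp: dir_cone_def inner_commute)
  then show ?thesis by (auto intro!: closed_Int closed_INT closed_hyperplane closed_halfspace_ge)
qed

lemma dir_map_dir_cone: "dir_map ` dir_cone \<subseteq> dir_cone"
proof clarify
  fix z assume z: "z \<in> dir_cone"
  obtain s where s: "s \<in> Stab" "local_fold (x0 + rot z) = s (x0 + rot z)" using local_fold by blast
  have iso: "affine_isometry s" using Wa_affine_isometry[OF Stab_Wa[OF s(1)]] .
  have orth: "dir_map z \<bullet> m = 0" if m: "m \<in> fixed_dirs" for m
  proof -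
    have "s (x0 + m) = x0 + m"
      using m wall_x0 by (intro Stab_fix[OF s(1)]) (simp add: fixed_dirs_def wall_line[of _ x0 1, simplified])
    then have "dir_map z \<bullet> m = (s (x0 + rot z) - s x0) \<bullet> (s (x0 + m) - s x0)"
      using s Stab_fix_x0[OF s(1)] by (simp add: dir_map_def)
    also have "\<dots> = rot z \<bullet> rot m"
      using affine_isometry_inner[OF iso] m by (simp add: fixed_dirs_def)
    also have "\<dots> = z \<bullet> m" using rot_orthogonal by (simp add: orthogonal_transformation_def)
    finally show ?thesis using z m by (simp add: dir_cone_def)
  qed
  have "0 \<le> wall_root i \<bullet> dir_map z" if "i \<in> walls_x0" for i
    using local_fold[of "x0 + rot z"] that wall_x0[OF that]
    by (simp add: dir_map_def chamber_x0_def wall_def inner_diff_right)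
  then show "dir_map z \<in> dir_cone" using orth by (simp add: dir_cone_def)
qed

text \<open>If some wall passes through \<open>x0\<close>, the cone of directions has a dual unit vector: the
  region \<open>{c \<bottom> fixed_dirs. wall_root i \<bullet> c \<ge> 1 for all walls i through x0}\<close> is nonempty
  (project \<open>a - x0\<close>, for an alcove point \<open>a\<close>, orthogonally to \<open>fixed_dirs\<close> and rescale).\<close>

lemma dir_cone_dual_vector:
  assumes J: "walls_x0 \<noteq> {}"
  obtains e where "e \<in> dir_cone" "norm e = 1" "\<And>k. k \<in> dir_cone \<Longrightarrow> 0 \<le> e \<bullet> k"
proof -
  define C where "C = {c. (\<forall>m\<in>fixed_dirs. c \<bullet> m = 0) \<and> (\<forall>i\<in>walls_x0. 1 \<le> wall_root i \<bullet> c)}"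
  have "C = (\<Inter>m\<in>fixed_dirs. {c. m \<bullet> c = 0}) \<inter> (\<Inter>i\<in>walls_x0. {c. wall_root i \<bullet> c \<ge> 1})"
    by (auto simp: C_def inner_commute)
  then have C_closed: "closed C" by (auto intro!: closed_Int closed_INT closed_hyperplane closed_halfspace_ge)
  moreover have C_ne: "C \<noteq> {}"
  proof -
    obtain a where a: "a \<in> Alc" using Alc_nonempty by blast
    obtain y z where yz: "y \<in> span fixed_dirs" "\<And>w. w \<in> span fixed_dirs \<Longrightarrow> orthogonal z w"
      "a - x0 = y + z"
      using orthogonal_subspace_decomp_exists[of fixed_dirs "a - x0"] by blast
    have y: "y \<in> fixed_dirs" using yz(1) span_eq_iff subspace_fixed_dirs by blast
    have z_orth: "\<forall>m\<in>fixed_dirs. z \<bullet> m = 0" using yz(2) span_base by (auto simp: orthogonal_def)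
    have z_pos: "0 < wall_root i \<bullet> z" if i: "i \<in> walls_x0" for i
    proof -
      have "wall_root i \<bullet> z = wall_root i \<bullet> (a - x0)"
        using y i by (simp add: yz(3) inner_add_right fixed_dirs_def)
      also have "\<dots> = wall i a" using wall_x0[OF i] by (simp add: wall_def inner_diff_right)
      finally show ?thesis using a i walls_x0_sub by (auto simp: Alc_def)
    qed
    define \<mu> where "\<mu> = Min ((\<lambda>i. wall_root i \<bullet> z) ` walls_x0)"
    have \<mu>: "0 < \<mu>" unfolding \<mu>_def using finite_walls_x0 J z_pos by (subst Min_gr_iff) auto
    have "\<mu> \<le> wall_root i \<bullet> z" if "i \<in> walls_x0" for i
      unfolding \<mu>_def using finite_walls_x0 that by (intro Min_le) auto
    then have "(1 / \<mu>) *\<^sub>R z \<in> C" using z_orth \<mu> by (auto simp: C_def field_simps)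
    then show ?thesis by blast
  qed
  have C0: "0 \<notin> C" using J by (auto simp: C_def)
  have C_sub: "C \<subseteq> dir_cone" by (auto simp: C_def dir_cone_def order_trans[OF zero_le_one])
  have C_shift: "c + t *\<^sub>R k \<in> C" if "c \<in> C" "k \<in> dir_cone" "0 \<le> t" for c k t
    using that by (auto simp: C_def dir_cone_def inner_add_left inner_add_right add_increasing2)
  show thesis
    using dual_unit_vector[OF C_closed C_ne C0 C_sub C_shift dir_cone_convex_cone] that by blast
qed

text \<open>Hence \<open>dir_map\<close> fixes a unit direction, and that direction leaves some wall through
  \<open>x0\<close>: otherwise it would lie in \<open>fixed_dirs\<close> and be orthogonal to itself.\<close>

lemma fixed_direction:
  assumes J: "walls_x0 \<noteq> {}"
  obtains z i0 where "z \<in> dir_cone" "dir_map z = z" "i0 \<in> walls_x0" "0 < wall_root i0 \<bullet> z"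
proof -
  obtain e where e: "e \<in> dir_cone" "norm e = 1" "\<And>k. k \<in> dir_cone \<Longrightarrow> 0 \<le> e \<bullet> k"
    using dir_cone_dual_vector[OF J] by blast
  obtain z where z: "z \<in> dir_cone" "norm z = 1" "dir_map z = z"
    using cone_fixed_unit_vector[OF dir_cone_convex_cone dir_cone_closed e
        dir_map_continuous dir_map_dir_cone dir_map_norm] by blast
  have "\<exists>i0\<in>walls_x0. 0 < wall_root i0 \<bullet> z"
  proof (rule ccontr)
    assume "\<not> ?thesis"
    then have z0: "\<forall>i\<in>walls_x0. wall_root i \<bullet> z = 0" using z(1) by (force simp: dir_cone_def)
    obtain s where s: "s \<in> Stab" "s (x0 + rot z) = x0 + z" using dir_map_fixed[OF z(3)] by blast
    have "s (x0 + z) = x0 + z"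
      using z0 wall_x0 by (intro Stab_fix[OF s(1)]) (simp add: wall_line[of _ x0 1, simplified])
    then have "s (x0 + rot z) = s (x0 + z)" using s(2) by simp
    then have "x0 + rot z = x0 + z"
      by (rule affine_isometry_inj[OF Wa_affine_isometry[OF Stab_Wa[OF s(1)]]])
    then have "rot z = z" by simp
    then have "z \<in> fixed_dirs" using z0 by (simp add: fixed_dirs_def)
    then have "z \<bullet> z = 0" using z(1) by (simp add: dir_cone_def)
    then show False using z(2) by simp
  qed
  then show thesis using that z by blast
qed

text \<open>Along a direction fixed by \<open>dir_map\<close> every point is again a solution: if
  \<open>s (x0 + rot z) = x0 + z\<close> with \<open>s \<in> Stab\<close>, then \<open>w0 \<circ> s\<^sup>-\<^sup>1\<close> works along the whole ray.\<close>

lemma fixed_direction_solutions: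
  assumes z: "dir_map z = z"
  obtains w1 where "w1 \<in> Wa" "\<And>e. (x0 + e *\<^sub>R z) - w1 (x0 + e *\<^sub>R z) = x0 - w0 x0"
proof -
  obtain s where s: "s \<in> Stab" "s (x0 + rot z) = x0 + z" using dir_map_fixed[OF z] by blast
  have si: "inv s \<in> Stab" using Stab_inv[OF s(1)] by blast
  have s_inv: "inv s (x0 + z) = x0 + rot z" using Wa_inv_apply[OF Stab_Wa[OF s(1)]] s(2) by metis
  have "w0 (inv s (x0 + e *\<^sub>R z)) = w0 x0 + e *\<^sub>R z" for e
  proof -
    have "inv s (x0 + e *\<^sub>R z) = x0 + e *\<^sub>R rot z"
      using affine_isometry_line[OF Wa_affine_isometry[OF Stab_Wa[OF si]], of x0 e "x0 + z"]
        Stab_fix_x0[OF si] s_inv by simp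
    also have "\<dots> = x0 + rot (e *\<^sub>R z)"
      using linear_scale[OF orthogonal_transformation_linear[OF rot_orthogonal], of e z] by simp
    also have "\<dots> = inv w0 (w0 x0 + e *\<^sub>R z)" by (simp add: rot_def)
    finally show ?thesis using Wa_apply_inv[OF w0_Wa] by simp
  qed
  then show thesis using that[of "w0 \<circ> inv s"] Wa_comp[OF w0_Wa Stab_Wa[OF si]] by simp
qed

lemma step_off_walls:
  assumes z: "z \<in> dir_cone" and i0: "i0 \<in> walls_x0" "0 < wall_root i0 \<bullet> z"
  obtains \<epsilon> where "x0 + \<epsilon> *\<^sub>R z \<in> Abar" "{i \<in> Walls. wall i (x0 + \<epsilon> *\<^sub>R z) = 0} \<subset> walls_x0"
proof -
  have "eventually (\<lambda>e. 0 < wall i (x0 + e *\<^sub>R z)) (at_right 0)" if "i \<in> Walls - walls_x0" for i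
    using eventually_pos_at_right_0[OF wall_x0_pos, of i "wall_root i \<bullet> z"] that by (simp add: wall_line)
  then have "eventually (\<lambda>e. \<forall>i\<in>Walls - walls_x0. 0 < wall i (x0 + e *\<^sub>R z)) (at_right 0)"
    using finite_Walls by (intro eventually_ball_finite) auto
  then obtain \<epsilon> where \<epsilon>: "0 < \<epsilon>" "\<forall>i\<in>Walls - walls_x0. 0 < wall i (x0 + \<epsilon> *\<^sub>R z)"
    by (rule eventually_at_right_0_witness)
  define x1 where "x1 = x0 + \<epsilon> *\<^sub>R z"
  have off: "0 < wall i x1" if "i \<in> Walls" "i \<notin> walls_x0" for i
    using \<epsilon>(2) that unfolding x1_def by blast
  have on_J: "0 \<le> wall i x1" "wall i x1 = 0 \<longleftrightarrow> wall_root i \<bullet> z = 0" if "i \<in> walls_x0" for i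
    using that z \<epsilon>(1) wall_x0 by (auto simp: x1_def wall_line dir_cone_def)
  have "0 \<le> wall i x1" if "i \<in> Walls" for i
    using on_J(1) off[OF that] by (cases "i \<in> walls_x0") auto
  then have "x1 \<in> Abar" by (simp add: Abar_def)
  moreover have "{i \<in> Walls. wall i x1 = 0} \<subset> walls_x0"
  proof
    show "{i \<in> Walls. wall i x1 = 0} \<subseteq> walls_x0" using off by fastforce
    have "i0 \<notin> {i \<in> Walls. wall i x1 = 0}" using on_J(2)[OF i0(1)] i0(2) by simp
    then show "{i \<in> Walls. wall i x1 = 0} \<noteq> walls_x0" using i0(1) by blast
  qed
  ultimately show thesis using that unfolding x1_def by blast
qed

lemma descent:
  assumes J: "walls_x0 \<noteq> {}"
  shows "\<exists>x1\<in>Abar. \<exists>w1\<in>Wa. x1 - w1 x1 = x0 - w0 x0 \<and> {i \<in> Walls. wall i x1 = 0} \<subset> walls_x0"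
proof -
  obtain z i0 where z: "z \<in> dir_cone" "dir_map z = z" and i0: "i0 \<in> walls_x0" "0 < wall_root i0 \<bullet> z"
    using fixed_direction[OF J] by blast
  obtain w1 where w1: "w1 \<in> Wa" "\<And>e. (x0 + e *\<^sub>R z) - w1 (x0 + e *\<^sub>R z) = x0 - w0 x0"
    using fixed_direction_solutions[OF z(2)] by blast
  obtain \<epsilon> where "x0 + \<epsilon> *\<^sub>R z \<in> Abar" "{i \<in> Walls. wall i (x0 + \<epsilon> *\<^sub>R z) = 0} \<subset> walls_x0"
    using step_off_walls[OF z(1) i0] by blast
  then show ?thesis using w1 by blast
qed

end

subsection \<open>The covering\<close>

context affine_root_data
begin

lemma descent_step:
  assumes "x \<in> Abar" "w \<in> Wa" "{i \<in> Walls. wall i x = 0} \<noteq> {}"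
  shows "\<exists>x1\<in>Abar. \<exists>w1\<in>Wa. x1 - w1 x1 = x - w x
           \<and> {i \<in> Walls. wall i x1 = 0} \<subset> {i \<in> Walls. wall i x = 0}"
proof -
  have "wall_descent R S am x w"
    by (intro wall_descent.intro wall_descent_axioms.intro affine_root_data.intro rs sr hr assms(1,2))
  then interpret wall_descent R S am x w .
  have J: "walls_x0 = {i \<in> Walls. wall i x = 0}" by (rule walls_x0_def)
  show ?thesis using descent[unfolded J, OF assms(3)] .
qed

lemma solution_in_alcove: "\<exists>x\<in>Alc. \<exists>w\<in>Wa. x - w x = v"
proof -
  have "\<exists>x\<in>Alc. \<exists>w\<in>Wa. x - w x = v"
    if "x \<in> Abar" "w \<in> Wa" "x - w x = v" "card {i \<in> Walls. wall i x = 0} = n" for x w n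
    using that
  proof (induction n arbitrary: x w rule: less_induct)
    case (less n)
    show ?case
    proof (cases "{i \<in> Walls. wall i x = 0} = {}")
      case True
      then have "wall i x \<noteq> 0" if "i \<in> Walls" for i using that by blast
      then have "x \<in> Alc" using less.prems(1) by (auto simp: Abar_def Alc_def less_le)
      then show ?thesis using less.prems by blast
    next
      case False
      then obtain x1 w1 where x1: "x1 \<in> Abar" "w1 \<in> Wa" "x1 - w1 x1 = v"
        and fewer: "{i \<in> Walls. wall i x1 = 0} \<subset> {i \<in> Walls. wall i x = 0}"
        using descent_step[OF less.prems(1,2) False] less.prems(3) by blast
      have "card {i \<in> Walls. wall i x1 = 0} < n"
        using psubset_card_mono[OF _ fewer] finite_Walls less.prems(4) by simp
      then show ?thesis using less.IH x1 by blast
    qed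
  qed
  then show ?thesis using solution_in_closure by blast
qed

lemma V_sets_disjoint:
  assumes w: "w \<in> Wa" "w' \<in> Wa" "w \<noteq> w'"
  shows "(\<lambda>x. x - w x) ` Alc \<inter> (\<lambda>x. x - w' x) ` Alc = {}"
proof -
  have "v \<notin> (\<lambda>x. x - w' x) ` Alc" if v: "v \<in> (\<lambda>x. x - w x) ` Alc" for v
  proof
    assume "v \<in> (\<lambda>x. x - w' x) ` Alc"
    then obtain x' where x': "x' \<in> Alc" "v = x' - w' x'" by blast
    obtain x where x: "x \<in> Alc" "v = x - w x" using v by blast
    have "x - w x = x' - w' x'" using x(2) x'(2) by simp
    then show False using difference_determines_element[OF w(1,2) x(1) x'(1)] w(3) by simp
  qed
  then show ?thesis by blast
qed

lemma V_sets_cover: "(\<Union>w\<in>Wa. (\<lambda>x. x - w x) ` Alc) = UNIV"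
proof (intro set_eqI iffI)
  fix v
  obtain x w where "x \<in> Alc" "w \<in> Wa" "x - w x = v" using solution_in_alcove by blast
  then show "v \<in> (\<Union>w\<in>Wa. (\<lambda>x. x - w x) ` Alc)" by blast
qed simp

end

theorem theorem2:
  fixes R S :: "'a::euclidean_space set" and \<alpha>m :: 'a
  assumes "root_system R" and "irreducible_rs R"
    and "simple_roots R S" and "highest_root R S \<alpha>m"
  shows "(\<forall>w\<in>affine_weyl S \<alpha>m. \<forall>w'\<in>affine_weyl S \<alpha>m. w \<noteq> w' \<longrightarrow>
            (\<lambda>x. x - w x) ` alcove S \<alpha>m \<inter> (\<lambda>x. x - w' x) ` alcove S \<alpha>m = {})
       \<and> (\<Union>w\<in>affine_weyl S \<alpha>m. (\<lambda>x. x - w x) ` alcove S \<alpha>m) = UNIV"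
proof -
  interpret affine_root_data R S \<alpha>m using assms by (simp add: affine_root_data_def)
  show ?thesis unfolding affine_weyl_eq alcove_eq using V_sets_disjoint V_sets_cover by blast
qed

end
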